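(* Let $n\ge2$ and let $X_1,\dots,X_n$ be real-valued (possibly dependent) random variables with order statistics $X_{1:n}\le\cdots\le X_{n:n}$, satisfying one of the following: (A) the distribution function of $X_{n:n}$ has infinite upper endpoint, $X_{n:n}\in\mathrm{GMDA}(h)$ for some positive $h$, and $$\lim_{x\to\infty}\frac{\mathbb{P}(|X_i|>t h(x),X_j>x)}{\mathbb{P}(X_{n:n}>x)}=0\ \text{for all }1\le i\ne j\le n,\ t>0,\qquad(\ast)$$ $$\lim_{x\to\infty}\frac{\mathbb{P}(X_i>Lh(x),X_j>Lh(x))}{\mathbb{P}(X_{n:n}>x)}=0\ \text{for all }1\le i<j\le n\text{ and some }L>0;\qquad(\ast\ast)$$ (B) $X_{n:n}\in\mathcal{L}$ and there exists $h\in\mathcal{H}_{X_{n:n}}$ such that $(\ast)$ and $(\ast\ast)$ hold; (C) $X_{n:n}\in\mathcal{L}\cap\mathcal{D}$ and there exists a dominatedly varying $h\in\mathcal{H}_{X_{n:n}}$ such that $(\ast)$ holds. Let $C_0,\dots,C_{n-1}$ be arbitrarily dependent random variables, independent of $(X_1,\dots,X_n)$, with $\mathbb{P}(a\le C_0\le b)=1$ and $\mathbb{P}(0\le C_i\le d)=1$ for $1\le i\le n-1$, where $0<a\le b<\infty$, $0\le d<\infty$. Then $$\mathbb{P}\Big(\sum_{i=0}^{n-1}C_iX_{n-i:n}>x\Big)\sim\mathbb{P}(C_0X_{n:n}>x)\sim\sum_{i=1}^n\mathbb{P}(C_0X_i>x),\qquad x\to\infty.$$ If moreover $X_1,\dots,X_n$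 are nonnegative, the same conclusion holds when instead $\mathbb{P}(a\le C_0\le b)=\mathbb{P}(|C_i|\le d)=1$ for $1\le i\le n-1$.
   Context: Real-valued random variables are assumed not concentrated on $(-\infty,0]$. For a distribution function $F$, $\overline{F}=1-F$, $x_F=\sup\{x:F(x)<1\}$. $F\in\mathrm{GMDA}(h)$ means $\lim_{x\to x_F}\overline{F}(x+yh(x))/\overline{F}(x)=e^{-y}$ for all $y\in\mathbb{R}$. $F\in\mathcal{L}$ means $\overline{F}(x)>0$ for all $x\ge0$ and $\overline{F}(x+y)\sim\overline{F}(x)$ for every $y\in\mathbb{R}$. $F\in\mathcal{D}$ means $\overline{F}$ is dominatedly varying; a positive $g$ is dominatedly varying if $0<\liminf g(xy)/g(x)\le\limsup g(xy)/g(x)<\infty$ as $x\to\infty$ for every $y>0$. For $F\in\mathcal{L}$, $\mathcal{H}_F$ is the set of eventually positive $h$ with $h(x)=o(x)$, $\overline{F}(x+yh(x))\sim\overline{F}(x)$ for all $y\in\mathbb{R}$, and $\limsup_{x\to\infty}h(x+yh(x))/h(x)<\infty$ for all $y\in\mathbb{R}$. $a\sim b$ means $a(x)/b(x)\to1$ as $x\to\infty$. *)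

theory Defs
  imports "HOL-Probability.Probability" "HOL-Library.Landau_Symbols"
begin

definition ord_stat :: "(nat \<Rightarrow> 'a \<Rightarrow> real) \<Rightarrow> nat \<Rightarrow> nat \<Rightarrow> 'a \<Rightarrow> real" where
  "ord_stat X n k w = sort (map (\<lambda>i. X i w) [1..<Suc n]) ! (k - 1)"

definition tail :: "'a measure \<Rightarrow> ('a \<Rightarrow> real) \<Rightarrow> real \<Rightarrow> real" where
  "tail M Y x = measure M {w \<in> space M. Y w > x}"

definition upper_endpoint :: "(real \<Rightarrow> real) \<Rightarrow> ereal" where
  "upper_endpoint Fb = Sup {ereal x | x. Fb x > 0}"

definition GMDA :: "(real \<Rightarrow> real) \<Rightarrow> (real \<Rightarrow> real) \<Rightarrow> bool" where
  "GMDA Fb h \<longleftrightarrow> (\<forall>y. ((\<lambda>x. Fb (x + y * h x) / Fb x) \<longlongrightarrow> exp (- y))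
      (if upper_endpoint Fb = \<infinity> then at_top else at_left (real_of_ereal (upper_endpoint Fb))))"

definition long_tailed :: "(real \<Rightarrow> real) \<Rightarrow> bool" where
  "long_tailed Fb \<longleftrightarrow> (\<forall>x\<ge>0. Fb x > 0) \<and> (\<forall>y. (\<lambda>x. Fb (x + y)) \<sim>[at_top] Fb)"

definition dominatedly_varying :: "(real \<Rightarrow> real) \<Rightarrow> bool" where
  "dominatedly_varying g \<longleftrightarrow> (eventually (\<lambda>x. g x > 0) at_top) \<and>
     (\<forall>y>0. 0 < Liminf at_top (\<lambda>x. ereal (g (x * y) / g x)) \<and>
            Liminf at_top (\<lambda>x. ereal (g (x * y) / g x)) \<le> Limsup at_top (\<lambda>x. ereal (g (x * y) / g x)) \<and>
            Limsup at_top (\<lambda>x. ereal (g (x * y) / g x)) < \<infinity>)"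

definition H_class :: "(real \<Rightarrow> real) \<Rightarrow> (real \<Rightarrow> real) \<Rightarrow> bool" where
  "H_class Fb h \<longleftrightarrow> (eventually (\<lambda>x. h x > 0) at_top) \<and> h \<in> o[at_top](\<lambda>x. x) \<and>
     (\<forall>y. (\<lambda>x. Fb (x + y * h x)) \<sim>[at_top] Fb) \<and>
     (\<forall>y. Limsup at_top (\<lambda>x. ereal (h (x + y * h x) / h x)) < \<infinity>)"

end

theory Submission
  imports Defs
begin

text \<open>Conditionally on the weights \<open>C = c\<close>, the weighted sum differs from \<open>c\<^sub>0 X\<^sub>n\<^sub>:\<^sub>n\<close> only by
  the lower terms, which are bounded by \<open>(n - 1) d\<close> times the second largest observation.
  If that observation is below a small multiple of \<open>h(x)\<close>, the perturbation is absorbed by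
  the insensitivity of the tail of \<open>X\<^sub>n\<^sub>:\<^sub>n\<close> to shifts of order \<open>h(x)\<close>; otherwise the event is
  negligible, by \<open>(**)\<close> or, in case (C), by dominated variation. Condition \<open>(*)\<close> keeps the
  other observations below \<open>t h(x)\<close> when one of them exceeds \<open>x\<close>, which gives the matching
  lower bound. All estimates are uniform in the admissible values \<open>c\<close>, so independence lets
  one integrate over \<open>C\<close>. The second equivalence is Bonferroni's inequality, the pairwise
  terms \<open>P(C\<^sub>0 X\<^sub>i > x, C\<^sub>0 X\<^sub>j > x)\<close> being negligible by \<open>(*)\<close>.\<close>

section \<open>Order statistics\<close>

lemma sorted_nth_gt_iff_count:
  fixes ys :: "'b::linorder list"
  assumes "sorted ys" "p < length ys"
  shows "t < ys ! p \<longleftrightarrow> length ys - p \<le> length (filter (\<lambda>y. t < y) ys)"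
  using assms
proof (induction ys arbitrary: p)
  case (Cons x xs)
  have above_x: "\<forall>y\<in>set xs. x \<le> y" using Cons.prems(1) by simp
  show ?case
  proof (cases p)
    case 0
    show ?thesis
    proof (cases "t < x")
      case True
      then have "filter (\<lambda>y. t < y) xs = xs" using above_x by (auto intro!: filter_True)
      then show ?thesis using True 0 by simp
    next
      case False
      then show ?thesis
        using 0 length_filter_le[of "\<lambda>y. t < y" xs] by (simp del: length_filter_le)
    qed
  next
    case (Suc q)
    have q: "q < length xs" using Cons.prems(2) Suc by simp
    have IH: "t < xs ! q \<longleftrightarrow> length xs - q \<le> length (filter (\<lambda>y. t < y) xs)"
      using Cons.IH[OF _ q] Cons.prems(1) by simp
    show ?thesis
    proof (cases "t < x")
      case True
      then have "filter (\<lambda>y. t < y) xs = xs" using above_x by (auto intro!: filter_True)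
      moreover have "t < xs ! q" using True above_x q by (meson less_le_trans nth_mem)
      ultimately show ?thesis using Suc True by simp
    qed (use Suc IH in simp)
  qed
qed simp

lemma card_ge_2_obtain:
  assumes "2 \<le> card A"
  obtains x y where "x \<in> A" "y \<in> A" "x \<noteq> y"
proof -
  obtain B where "B \<subseteq> A" "card B = 2"
    using obtain_subset_with_card_n[OF assms] by blast
  then show ?thesis using that by (auto simp: card_2_iff)
qed

lemma ord_stat_gt_iff:
  assumes "1 \<le> k" "k \<le> n"
  shows "t < ord_stat X n k w \<longleftrightarrow> n + 1 - k \<le> card {i\<in>{1..n}. t < X i w}"
proof -
  let ?xs = "map (\<lambda>i. X i w) [1..<Suc n]"
  have "t < ord_stat X n k w \<longleftrightarrow> n - (k - 1) \<le> length (filter (\<lambda>y. t < y) (sort ?xs))"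
    unfolding ord_stat_def using assms sorted_nth_gt_iff_count[of "sort ?xs" "k - 1" t] by simp
  also have "length (filter (\<lambda>y. t < y) (sort ?xs)) = length (filter (\<lambda>i. t < X i w) [1..<Suc n])"
    by (simp add: filter_sort filter_map o_def)
  also have "\<dots> = card ({i. t < X i w} \<inter> set [1..<Suc n])"
    by (simp add: distinct_length_filter)
  also have "{i. t < X i w} \<inter> set [1..<Suc n] = {i\<in>{1..n}. t < X i w}" by auto
  finally show ?thesis using assms by simp
qed

lemma ord_stat_attained:
  assumes "1 \<le> k" "k \<le> n"
  obtains i where "i \<in> {1..n}" "ord_stat X n k w = X i w"
proof -
  have "ord_stat X n k w \<in> set (sort (map (\<lambda>i. X i w) [1..<Suc n]))"
    unfolding ord_stat_def using assms by (intro nth_mem) simp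
  then obtain i where "i \<in> set [1..<Suc n]" "ord_stat X n k w = X i w" by auto
  then show ?thesis using that[of i] by auto
qed

lemma ord_stat_mono:
  assumes "1 \<le> k" "k \<le> k'" "k' \<le> n"
  shows "ord_stat X n k w \<le> ord_stat X n k' w"
  unfolding ord_stat_def using assms by (intro sorted_nth_mono) auto

lemma le_ord_stat_max:
  assumes "i \<in> {1..n}"
  shows "X i w \<le> ord_stat X n n w"
proof (rule ccontr)
  assume "\<not> ?thesis"
  then have "i \<in> {i\<in>{1..n}. ord_stat X n n w < X i w}" using assms by simp
  then have "1 \<le> card {i\<in>{1..n}. ord_stat X n n w < X i w}"
    by (auto simp: Suc_le_eq card_gt_0_iff)
  then show False using ord_stat_gt_iff[of n n "ord_stat X n n w" X w] assms by simp
qed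

lemma ord_stat_second_gt:
  assumes "2 \<le> n" "t < ord_stat X n (n - 1) w"
  obtains i j where "i \<in> {1..n}" "j \<in> {1..n}" "i \<noteq> j" "t < X i w" "t < X j w"
proof -
  have "2 \<le> card {i\<in>{1..n}. t < X i w}"
    using ord_stat_gt_iff[of "n - 1" n t X w] assms by simp
  then show ?thesis using that by (elim card_ge_2_obtain) auto
qed

lemma ord_stat_second_gt_avoid:
  assumes "2 \<le> n" "t < ord_stat X n (n - 1) w"
  obtains i where "i \<in> {1..n}" "i \<noteq> j" "t < X i w"
proof -
  obtain i i' where "i \<in> {1..n}" "i' \<in> {1..n}" "i \<noteq> i'" "t < X i w" "t < X i' w"
    by (rule ord_stat_second_gt[OF assms])
  then show ?thesis using that by (cases "i = j") auto
qed

lemma ord_stat_second_and_max_gt: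
  assumes "2 \<le> n" "t < ord_stat X n (n - 1) w" "z < ord_stat X n n w"
  obtains i j where "i \<in> {1..n}" "j \<in> {1..n}" "i \<noteq> j" "t < X i w" "z < X j w"
proof -
  obtain j where j: "j \<in> {1..n}" "ord_stat X n n w = X j w"
    by (rule ord_stat_attained[of n n X w]) (use assms in auto)
  obtain i where "i \<in> {1..n}" "i \<noteq> j" "t < X i w"
    using ord_stat_second_gt_avoid[OF assms(1,2)] .
  then show ?thesis using that j assms(3) by simp
qed

lemma ord_stat_pair_gt_or_max_gt:
  assumes "2 \<le> n" "0 \<le> K" "y < ord_stat X n n w + K * ord_stat X n (n-1) w"
  shows "(\<exists>i\<in>{1..n}. \<exists>j\<in>{1..n}. i < j \<and> u < X i w \<and> u < X j w) \<or> y - K * u < ord_stat X n n w"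
proof (cases "u < ord_stat X n (n-1) w")
  case True
  then obtain i j where ij: "i \<in> {1..n}" "j \<in> {1..n}" "i \<noteq> j" "u < X i w" "u < X j w"
    by (rule ord_stat_second_gt[OF assms(1)])
  then have "min i j < max i j" "u < X (min i j) w" "u < X (max i j) w"
    by (auto simp: min_def max_def)
  then show ?thesis using ij(1,2) by (intro disjI1 bexI[where x="min i j"] bexI[where x="max i j"]) auto
next
  case False
  then have "K * ord_stat X n (n-1) w \<le> K * u" using assms(2) by (intro mult_left_mono) auto
  then show ?thesis using assms(3) by simp
qed

lemma abs_ord_stat_le_of_others:
  assumes n: "2 \<le> n" "1 \<le> k" "k \<le> n - 1"
    and j: "j \<in> {1..n}" "X j w = ord_stat X n n w"
    and others: "\<And>i. i \<in> {1..n} \<Longrightarrow> i \<noteq> j \<Longrightarrow> \<bar>X i w\<bar> \<le> v"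
  shows "\<bar>ord_stat X n k w\<bar> \<le> v"
proof -
  have "ord_stat X n (n - 1) w \<le> v"
  proof (rule ccontr)
    assume "\<not> ?thesis"
    then have "v < ord_stat X n (n - 1) w" by simp
    then obtain i where "i \<in> {1..n}" "i \<noteq> j" "v < X i w"
      by (rule ord_stat_second_gt_avoid[OF n(1)])
    then show False using others[of i] by simp
  qed
  moreover have "ord_stat X n k w \<le> ord_stat X n (n - 1) w" using n by (intro ord_stat_mono) auto
  moreover have "- v \<le> ord_stat X n k w"
  proof -
    obtain i where i: "i \<in> {1..n}" "ord_stat X n k w = X i w"
      by (rule ord_stat_attained[of k n X w]) (use n in auto)
    define i' where "i' = (if j = 1 then 2 else (1::nat))"
    have i': "i' \<in> {1..n}" "i' \<noteq> j" using n(1) j(1) unfolding i'_def by auto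
    have "X i' w \<le> X j w" using le_ord_stat_max[OF i'(1)] j(2) by simp
    show ?thesis
    proof (cases "i = j")
      case True
      then show ?thesis using i(2) j(2) \<open>X i' w \<le> X j w\<close> others[OF i'] by simp
    next
      case False
      then show ?thesis using i others[of i] by simp
    qed
  qed
  ultimately show ?thesis by linarith
qed

lemma ord_stat_measurable:
  assumes X: "\<And>i. i \<in> {1..n} \<Longrightarrow> X i \<in> borel_measurable N" and k: "1 \<le> k" "k \<le> n"
  shows "ord_stat X n k \<in> borel_measurable N"
proof (subst borel_measurable_iff_greater, intro allI)
  fix t
  have count: "real (card {i\<in>{1..n}. t < X i w}) = (\<Sum>i\<in>{1..n}. if t < X i w then 1 else 0)" for w
    by (subst sum.inter_filter[symmetric]) auto
  have count_measurable: "(\<lambda>w. \<Sum>i\<in>{1..n}. if t < X i w then 1 else (0::real)) \<in> borel_measurable N"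
  proof (rule borel_measurable_sum)
    fix i assume "i \<in> {1..n}"
    then have "{w \<in> space N. t < X i w} \<in> sets N" using X borel_measurable_iff_greater by blast
    then show "(\<lambda>w. if t < X i w then 1 else (0::real)) \<in> borel_measurable N"
      by (intro measurable_If) auto
  qed
  have "{w \<in> space N. t < ord_stat X n k w} =
        {w \<in> space N. real (n + 1 - k) \<le> (\<Sum>i\<in>{1..n}. if t < X i w then 1 else 0)}"
    unfolding ord_stat_gt_iff[OF k] count[symmetric] of_nat_le_iff ..
  also have "\<dots> \<in> sets N"
    using count_measurable[unfolded borel_measurable_iff_ge] by (rule spec)
  finally show "{w \<in> space N. t < ord_stat X n k w} \<in> sets N" .
qed

lemma ord_stat_cong:
  assumes "\<And>i. i \<in> {1..n} \<Longrightarrow> X i w = X' i w'"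
  shows "ord_stat X n k w = ord_stat X' n k w'"
proof -
  have "map (\<lambda>i. X i w) [1..<Suc n] = map (\<lambda>i. X' i w') [1..<Suc n]"
    using assms by (intro map_cong) auto
  then show ?thesis unfolding ord_stat_def by (simp only:)
qed

lemma sum_weighted_ord_stat_split:
  assumes "1 \<le> n"
  shows "(\<Sum>i=0..n-1. c i * ord_stat X n (n-i) w) =
         c 0 * ord_stat X n n w + (\<Sum>i=1..n-1. c i * ord_stat X n (n-i) w)"
  by (subst sum.atLeast_Suc_atMost) simp_all

lemma sum_lower_weighted_ord_stat_le:
  assumes n: "2 \<le> n" and d: "0 \<le> d" and c: "\<forall>i\<in>{1..n-1}. \<bar>c i\<bar> \<le> d"
    and sign: "(\<forall>i\<in>{1..n-1}. 0 \<le> c i) \<or> (\<forall>i\<in>{1..n}. 0 \<le> X i w)"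
  shows "(\<Sum>i=1..n-1. c i * ord_stat X n (n-i) w) \<le> real (n-1) * d * max (ord_stat X n (n-1) w) 0"
proof -
  let ?s = "max (ord_stat X n (n-1) w) 0"
  have "c i * ord_stat X n (n-i) w \<le> d * ?s" if i: "i \<in> {1..n-1}" for i
  proof -
    have le_second: "ord_stat X n (n-i) w \<le> ord_stat X n (n-1) w"
      using i n by (intro ord_stat_mono) auto
    have ci: "\<bar>c i\<bar> \<le> d" using c i by blast
    show ?thesis
    proof (cases "0 \<le> c i")
      case True
      have "c i * ord_stat X n (n-i) w \<le> c i * ?s"
        using le_second True by (intro mult_left_mono) auto
      also have "\<dots> \<le> d * ?s" using ci True by (intro mult_right_mono) auto
      finally show ?thesis .
    next
      case False
      then have "\<forall>i\<in>{1..n}. 0 \<le> X i w" using sign i by auto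
      moreover obtain k where "k \<in> {1..n}" "ord_stat X n (n-i) w = X k w"
        by (rule ord_stat_attained[of "n-i" n X w]) (use i n in auto)
      ultimately have nonneg: "0 \<le> ord_stat X n (n-i) w" by simp
      have "c i * ord_stat X n (n-i) w \<le> d * ord_stat X n (n-i) w"
        using ci nonneg by (intro mult_right_mono) auto
      also have "\<dots> \<le> d * ?s" using le_second d by (intro mult_left_mono) auto
      finally show ?thesis .
    qed
  qed
  then have "(\<Sum>i=1..n-1. c i * ord_stat X n (n-i) w) \<le> (\<Sum>i=1..n-1. d * ?s)"
    by (rule sum_mono)
  then show ?thesis by simp
qed

lemma sum_lower_weighted_ord_stat_ge:
  assumes n: "2 \<le> n" and d: "0 \<le> d" and c: "\<forall>i\<in>{1..n-1}. \<bar>c i\<bar> \<le> d"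
    and j: "j \<in> {1..n}" "X j w = ord_stat X n n w"
    and others: "\<And>i. i \<in> {1..n} \<Longrightarrow> i \<noteq> j \<Longrightarrow> \<bar>X i w\<bar> \<le> v"
  shows "- (real (n-1) * d * v) \<le> (\<Sum>i=1..n-1. c i * ord_stat X n (n-i) w)"
proof -
  have "- (d * v) \<le> c i * ord_stat X n (n-i) w" if i: "i \<in> {1..n-1}" for i
  proof -
    have "\<bar>ord_stat X n (n-i) w\<bar> \<le> v"
      using i by (intro abs_ord_stat_le_of_others[OF n _ _ j others]) auto
    then have "\<bar>c i * ord_stat X n (n-i) w\<bar> \<le> d * v"
      unfolding abs_mult using c i d by (intro mult_mono) auto
    then show ?thesis by linarith
  qed
  then have "(\<Sum>i=1..n-1. - (d * v)) \<le> (\<Sum>i=1..n-1. c i * ord_stat X n (n-i) w)"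
    by (rule sum_mono)
  then show ?thesis by simp
qed

lemma eventually_le_mult_of_ratio_tendsto:
  fixes f g :: "real \<Rightarrow> real"
  assumes "((\<lambda>x. f x / g x) \<longlongrightarrow> L) at_top" "eventually (\<lambda>x. 0 < g x) at_top" "L < U"
  shows "eventually (\<lambda>x. f x \<le> U * g x) at_top"
proof -
  have "eventually (\<lambda>x. f x / g x < U) at_top" using assms(1,3) by (rule order_tendstoD)
  with assms(2) show ?thesis by eventually_elim (simp add: pos_divide_less_eq)
qed

lemma eventually_mult_le_of_ratio_tendsto:
  fixes f g :: "real \<Rightarrow> real"
  assumes "((\<lambda>x. f x / g x) \<longlongrightarrow> L) at_top" "eventually (\<lambda>x. 0 < g x) at_top" "U < L"
  shows "eventually (\<lambda>x. U * g x \<le> f x) at_top"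
proof -
  have "eventually (\<lambda>x. U < f x / g x) at_top" using assms(1,3) by (rule order_tendstoD)
  with assms(2) show ?thesis by eventually_elim (simp add: pos_less_divide_eq)
qed

lemma eventually_less_of_Limsup_less_infinity:
  fixes f :: "real \<Rightarrow> real"
  assumes "Limsup at_top (\<lambda>x. ereal (f x)) < \<infinity>"
  obtains B where "0 < B" "eventually (\<lambda>x. f x < B) at_top"
proof -
  obtain B where "Limsup at_top (\<lambda>x. ereal (f x)) < ereal B"
  proof (cases "Limsup at_top (\<lambda>x. ereal (f x))")
    case (real r)
    then show ?thesis using that[of "r + 1"] by simp
  qed (use assms that[of 0] in auto)
  then have "eventually (\<lambda>x. ereal (f x) < ereal B) at_top" by (rule Limsup_lessD)
  then have "eventually (\<lambda>x. f x < max B 1) at_top" by (rule eventually_mono) auto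
  then show ?thesis using that[of "max B 1"] by simp
qed

lemma asymp_equiv_of_relative_bounds:
  fixes p q :: "real \<Rightarrow> real"
  assumes pos: "eventually (\<lambda>x. 0 < p x) at_top"
    and bounds: "\<And>e. 0 < e \<Longrightarrow> eventually (\<lambda>x. (1 - e) * p x \<le> q x \<and> q x \<le> (1 + e) * p x) at_top"
  shows "q \<sim>[at_top] p"
proof (rule asymp_equivI', rule tendstoI)
  fix e :: real assume e: "0 < e"
  have "eventually (\<lambda>x. (1 - e/2) * p x \<le> q x \<and> q x \<le> (1 + e/2) * p x) at_top"
    using e by (intro bounds) simp
  with pos show "eventually (\<lambda>x. dist (q x / p x) 1 < e) at_top"
  proof eventually_elim
    case (elim x)
    then have "1 - e/2 \<le> q x / p x" "q x / p x \<le> 1 + e/2"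
      by (simp_all add: pos_le_divide_eq pos_divide_le_eq)
    then show ?case using e by (simp add: dist_real_def abs_if)
  qed
qed

lemma eventually_at_top_divide_uniform:
  fixes P :: "real \<Rightarrow> bool"
  assumes "0 < a" "eventually P at_top"
  shows "eventually (\<lambda>x. \<forall>c. a \<le> c \<longrightarrow> c \<le> b \<longrightarrow> P (x / c)) at_top"
proof -
  obtain y0 where y0: "\<And>y. y0 \<le> y \<Longrightarrow> P y" using assms(2) by (auto simp: eventually_at_top_linorder)
  have "P (x / c)" if x: "max b 1 * max y0 0 \<le> x" and c: "a \<le> c" "c \<le> b" for x c
  proof (rule y0)
    have b1: "0 < max b 1" by simp
    have x0: "0 \<le> x" using x by (meson b1 max.cobounded2 less_imp_le mult_nonneg_nonneg order.trans)
    have "max y0 0 * max b 1 \<le> x" using x by (simp only: mult.commute)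
    then have "max y0 0 \<le> x / max b 1" by (simp only: pos_le_divide_eq[OF b1])
    also have "x / max b 1 \<le> x / c"
      using x0 c assms(1) by (intro divide_left_mono) auto
    finally show "y0 \<le> x / c" by simp
  qed
  then show ?thesis unfolding eventually_at_top_linorder by blast
qed

section \<open>The largest observation\<close>

lemma (in prob_space) prob_UN_UN_le_sum:
  assumes "finite I" "\<And>i. i \<in> I \<Longrightarrow> finite (J i)"
    and "\<And>i j. i \<in> I \<Longrightarrow> j \<in> J i \<Longrightarrow> E i j \<in> events"
  shows "prob (\<Union>i\<in>I. \<Union>j\<in>J i. E i j) \<le> (\<Sum>i\<in>I. \<Sum>j\<in>J i. prob (E i j))"
proof -
  have "prob (\<Union>i\<in>I. \<Union>j\<in>J i. E i j) \<le> (\<Sum>i\<in>I. prob (\<Union>j\<in>J i. E i j))"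
    using assms by (intro finite_measure_subadditive_finite sets.finite_UN) auto
  also have "\<dots> \<le> (\<Sum>i\<in>I. \<Sum>j\<in>J i. prob (E i j))"
    using assms by (intro sum_mono finite_measure_subadditive_finite) auto
  finally show ?thesis .
qed

locale order_stat_model =
  fixes M :: "'a measure" and n :: nat and X :: "nat \<Rightarrow> 'a \<Rightarrow> real"
  assumes prob_space: "prob_space M"
    and n2: "2 \<le> n"
    and X_measurable: "\<And>i. i \<in> {1..n} \<Longrightarrow> X i \<in> borel_measurable M"
begin

sublocale prob_space M by (rule prob_space)

abbreviation tail_max :: "real \<Rightarrow> real" where
  "tail_max \<equiv> tail M (ord_stat X n n)"

lemma ord_stat_borel_measurable: "1 \<le> k \<Longrightarrow> k \<le> n \<Longrightarrow> ord_stat X n k \<in> borel_measurable M"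
  by (rule ord_stat_measurable[OF X_measurable])

lemma max_measurable[measurable]: "ord_stat X n n \<in> borel_measurable M"
  using n2 by (intro ord_stat_borel_measurable) auto

lemma second_measurable[measurable]: "ord_stat X n (n - 1) \<in> borel_measurable M"
  using n2 by (intro ord_stat_borel_measurable) auto

lemma antimono_tail_max: "antimono tail_max"
  unfolding tail_def by (intro antimonoI finite_measure_mono) auto

lemma tail_max_nonneg: "0 \<le> tail_max x"
  unfolding tail_def by simp

lemma tail_max_tendsto_0: "(tail_max \<longlongrightarrow> 0) at_top"
proof -
  let ?D = "distr M borel (ord_stat X n n)"
  interpret D: real_distribution ?D by (intro real_distribution_distr) simp
  have "tail_max = (\<lambda>x. 1 - cdf ?D x)"
  proof
    fix x
    have "cdf ?D x = prob (space M - {w \<in> space M. x < ord_stat X n n w})"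
      unfolding cdf_def by (subst measure_distr) (auto intro!: arg_cong[where f=prob])
    also have "\<dots> = 1 - tail_max x" unfolding tail_def by (subst prob_compl) auto
    finally show "tail_max x = 1 - cdf ?D x" by simp
  qed
  moreover have "((\<lambda>x. 1 - cdf ?D x) \<longlongrightarrow> 1 - 1) at_top"
    by (intro tendsto_intros D.cdf_lim_at_top_prob)
  ultimately show ?thesis by simp
qed

definition pair_event :: "real \<Rightarrow> real \<Rightarrow> 'a set" where
  "pair_event u y = (\<Union>i\<in>{1..n}. \<Union>j\<in>{1..n}-{i}. {w \<in> space M. u < \<bar>X i w\<bar> \<and> y < X j w})"

lemma obs_pair_sets:
  "i \<in> {1..n} \<Longrightarrow> j \<in> {1..n} \<Longrightarrow> {w \<in> space M. u < \<bar>X i w\<bar> \<and> y < X j w} \<in> events"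
  using X_measurable[of i] X_measurable[of j] by measurable

lemma pair_event_sets: "pair_event u y \<in> events"
  unfolding pair_event_def using obs_pair_sets by (intro sets.finite_UN) auto

lemma pair_event_negligible:
  assumes tail_pos: "eventually (\<lambda>y. 0 < tail_max y) at_top"
    and star: "\<And>i j. i \<in> {1..n} \<Longrightarrow> j \<in> {1..n} \<Longrightarrow> i \<noteq> j \<Longrightarrow>
       ((\<lambda>x. prob {w \<in> space M. \<bar>X i w\<bar> > t * h x \<and> X j w > x} / tail_max x) \<longlongrightarrow> 0) at_top"
  shows "((\<lambda>y. prob (pair_event (t * h y) y) / tail_max y) \<longlongrightarrow> 0) at_top"
proof (rule tendsto_sandwich[OF _ _ tendsto_const])
  let ?p = "\<lambda>i j y. prob {w \<in> space M. t * h y < \<bar>X i w\<bar> \<and> y < X j w}"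
  show "eventually (\<lambda>y. 0 \<le> prob (pair_event (t * h y) y) / tail_max y) at_top"
    by (simp add: tail_max_nonneg)
  show "((\<lambda>y. \<Sum>i\<in>{1..n}. \<Sum>j\<in>{1..n}-{i}. ?p i j y / tail_max y) \<longlongrightarrow> 0) at_top"
    using star by (intro tendsto_null_sum) auto
  show "eventually (\<lambda>y. prob (pair_event (t * h y) y) / tail_max y
      \<le> (\<Sum>i\<in>{1..n}. \<Sum>j\<in>{1..n}-{i}. ?p i j y / tail_max y)) at_top"
    using tail_pos
  proof eventually_elim
    case (elim y)
    have "prob (pair_event (t * h y) y) \<le> (\<Sum>i\<in>{1..n}. \<Sum>j\<in>{1..n}-{i}. ?p i j y)"
      unfolding pair_event_def using obs_pair_sets by (intro prob_UN_UN_le_sum) auto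
    then show ?case
      using elim by (simp add: divide_right_mono sum_divide_distrib[symmetric])
  qed
qed

lemma second_max_negligible:
  assumes tail_pos: "eventually (\<lambda>y. 0 < tail_max y) at_top"
    and star: "\<And>i j t. i \<in> {1..n} \<Longrightarrow> j \<in> {1..n} \<Longrightarrow> i \<noteq> j \<Longrightarrow> 0 < t \<Longrightarrow>
       ((\<lambda>x. prob {w \<in> space M. \<bar>X i w\<bar> > t * h x \<and> X j w > x} / tail_max x) \<longlongrightarrow> 0) at_top"
    and z: "filterlim z at_top at_top"
    and tail_z: "eventually (\<lambda>y. tail_max (z y) \<le> D * tail_max y) at_top"
    and h_z: "eventually (\<lambda>y. h (z y) \<le> \<Lambda> * h y) at_top"
    and \<Lambda>: "0 < \<Lambda>" and \<delta>: "0 < \<delta>"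
  shows "((\<lambda>y. prob {w \<in> space M. \<delta> * h y < ord_stat X n (n-1) w \<and> z y < ord_stat X n n w}
           / tail_max y) \<longlongrightarrow> 0) at_top"
proof (rule tendsto_sandwich[OF _ _ tendsto_const])
  define t where "t = \<delta> / \<Lambda>"
  have t: "0 < t" "t * \<Lambda> = \<delta>" unfolding t_def using \<delta> \<Lambda> by auto
  let ?q = "\<lambda>y. prob (pair_event (t * h y) y) / tail_max y"
  have "(?q \<longlongrightarrow> 0) at_top"
    using t by (intro pair_event_negligible tail_pos star) auto
  then show "((\<lambda>y. max D 0 * ?q (z y)) \<longlongrightarrow> 0) at_top"
    by (intro tendsto_mult_right_zero filterlim_compose[OF _ z])
  show "eventually (\<lambda>y. 0 \<le> prob {w \<in> space M. \<delta> * h y < ord_stat X n (n-1) w \<and> z y < ord_stat X n n w}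
      / tail_max y) at_top"
    by (simp add: tail_max_nonneg)
  have tail_pos_z: "eventually (\<lambda>y. 0 < tail_max (z y)) at_top"
    using z tail_pos by (rule filterlim_iff[THEN iffD1, rule_format])
  show "eventually (\<lambda>y. prob {w \<in> space M. \<delta> * h y < ord_stat X n (n-1) w \<and> z y < ord_stat X n n w}
      / tail_max y \<le> max D 0 * ?q (z y)) at_top"
    using tail_pos tail_pos_z tail_z h_z
  proof eventually_elim
    case (elim y)
    have "{w \<in> space M. \<delta> * h y < ord_stat X n (n-1) w \<and> z y < ord_stat X n n w}
        \<subseteq> pair_event (t * h (z y)) (z y)"
    proof safe
      fix w assume w: "w \<in> space M" "\<delta> * h y < ord_stat X n (n-1) w" "z y < ord_stat X n n w"
      obtain i j where ij: "i \<in> {1..n}" "j \<in> {1..n}" "i \<noteq> j" "\<delta> * h y < X i w" "z y < X j w"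
        by (rule ord_stat_second_and_max_gt[OF n2 w(2,3)])
      have "t * h (z y) \<le> t * (\<Lambda> * h y)" using elim(4) t by (intro mult_left_mono) auto
      also have "\<dots> = \<delta> * h y" using t by (simp add: mult.assoc[symmetric])
      finally have "t * h (z y) < \<bar>X i w\<bar>" using ij(4) by linarith
      then show "w \<in> pair_event (t * h (z y)) (z y)"
        unfolding pair_event_def using w ij by (intro UN_I[where a=i] UN_I[where a=j]) auto
    qed
    then have "prob {w \<in> space M. \<delta> * h y < ord_stat X n (n-1) w \<and> z y < ord_stat X n n w}
        \<le> prob (pair_event (t * h (z y)) (z y))"
      by (rule finite_measure_mono[OF _ pair_event_sets])
    also have "\<dots> = ?q (z y) * tail_max (z y)" using elim(2) by simp
    also have "\<dots> \<le> ?q (z y) * (max D 0 * tail_max y)"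
    proof (rule mult_left_mono)
      have "D * tail_max y \<le> max D 0 * tail_max y" by (intro mult_right_mono tail_max_nonneg) simp
      then show "tail_max (z y) \<le> max D 0 * tail_max y" using elim(3) by linarith
    qed (simp add: tail_max_nonneg)
    finally show ?case using elim(1) by (simp add: pos_divide_le_eq mult_ac)
  qed
qed

lemma second_negligible_of_joint_tail:
  assumes tail_pos: "eventually (\<lambda>y. 0 < tail_max y) at_top"
    and star: "\<And>i j t. i \<in> {1..n} \<Longrightarrow> j \<in> {1..n} \<Longrightarrow> i \<noteq> j \<Longrightarrow> 0 < t \<Longrightarrow>
       ((\<lambda>x. prob {w \<in> space M. \<bar>X i w\<bar> > t * h x \<and> X j w > x} / tail_max x) \<longlongrightarrow> 0) at_top"
    and star2: "\<And>i j. i \<in> {1..n} \<Longrightarrow> j \<in> {1..n} \<Longrightarrow> i < j \<Longrightarrow>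
       ((\<lambda>x. prob {w \<in> space M. X i w > L * h x \<and> X j w > L * h x} / tail_max x) \<longlongrightarrow> 0) at_top"
    and z: "filterlim (\<lambda>y. y - K * L * h y) at_top at_top"
    and tail_z: "eventually (\<lambda>y. tail_max (y - K * L * h y) \<le> D * tail_max y) at_top"
    and h_z: "eventually (\<lambda>y. h (y - K * L * h y) \<le> \<Lambda> * h y) at_top"
    and \<Lambda>: "0 < \<Lambda>" and K: "0 \<le> K" and \<delta>: "0 < \<delta>"
  shows "((\<lambda>y. prob {w \<in> space M. \<delta> * h y < ord_stat X n (n-1) w \<and>
           y < ord_stat X n n w + K * ord_stat X n (n-1) w} / tail_max y) \<longlongrightarrow> 0) at_top"
proof (rule tendsto_sandwich[OF _ _ tendsto_const])
  let ?S = "\<lambda>y. {w \<in> space M. \<delta> * h y < ord_stat X n (n-1) w \<and>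
           y < ord_stat X n n w + K * ord_stat X n (n-1) w}"
  let ?E = "\<lambda>y. {w \<in> space M. \<delta> * h y < ord_stat X n (n-1) w \<and> y - K * L * h y < ord_stat X n n w}"
  let ?J = "\<lambda>y i j. {w \<in> space M. X i w > L * h y \<and> X j w > L * h y}"
  let ?I = "\<lambda>i. {j \<in> {1..n}. i < j}"
  have J_sets: "?J y i j \<in> events" if "i \<in> {1..n}" "j \<in> {1..n}" for y i j
    using X_measurable[OF that(1)] X_measurable[OF that(2)] by measurable
  have E_sets: "?E y \<in> events" for y by measurable
  show "eventually (\<lambda>y. 0 \<le> prob (?S y) / tail_max y) at_top"
    by (simp add: tail_max_nonneg)
  have "((\<lambda>y. (\<Sum>i\<in>{1..n}. \<Sum>j\<in>?I i. prob (?J y i j) / tail_max y) + prob (?E y) / tail_max y)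
      \<longlongrightarrow> 0 + 0) at_top"
    using star2 by (intro tendsto_add tendsto_null_sum second_max_negligible[OF tail_pos star z tail_z h_z \<Lambda> \<delta>])
      auto
  then show "((\<lambda>y. (\<Sum>i\<in>{1..n}. \<Sum>j\<in>?I i. prob (?J y i j) / tail_max y) + prob (?E y) / tail_max y)
      \<longlongrightarrow> 0) at_top" by simp
  show "eventually (\<lambda>y. prob (?S y) / tail_max y
      \<le> (\<Sum>i\<in>{1..n}. \<Sum>j\<in>?I i. prob (?J y i j) / tail_max y) + prob (?E y) / tail_max y) at_top"
    using tail_pos
  proof eventually_elim
    case (elim y)
    have "?S y \<subseteq> (\<Union>i\<in>{1..n}. \<Union>j\<in>?I i. ?J y i j) \<union> ?E y"
    proof
      fix w assume w: "w \<in> ?S y"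
      then have "y < ord_stat X n n w + K * ord_stat X n (n-1) w" by simp
      note dichotomy = ord_stat_pair_gt_or_max_gt[OF n2 K this, of "L * h y"]
      show "w \<in> (\<Union>i\<in>{1..n}. \<Union>j\<in>?I i. ?J y i j) \<union> ?E y"
      proof (cases "y - K * (L * h y) < ord_stat X n n w")
        case True
        then show ?thesis using w by (simp add: mult.assoc)
      next
        case False
        then obtain i j where "i \<in> {1..n}" "j \<in> {1..n}" "i < j" "L * h y < X i w" "L * h y < X j w"
          using dichotomy by blast
        then show ?thesis using w by (intro UnI1 UN_I[where a=i] UN_I[where a=j]) auto
      qed
    qed
    then have "prob (?S y) \<le> prob ((\<Union>i\<in>{1..n}. \<Union>j\<in>?I i. ?J y i j) \<union> ?E y)"
      using J_sets E_sets by (intro finite_measure_mono sets.Un sets.finite_UN) auto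
    also have "\<dots> \<le> prob (\<Union>i\<in>{1..n}. \<Union>j\<in>?I i. ?J y i j) + prob (?E y)"
      using J_sets E_sets by (intro measure_Un_le sets.finite_UN) auto
    also have "prob (\<Union>i\<in>{1..n}. \<Union>j\<in>?I i. ?J y i j) \<le> (\<Sum>i\<in>{1..n}. \<Sum>j\<in>?I i. prob (?J y i j))"
      using J_sets by (intro prob_UN_UN_le_sum) auto
    finally show ?case
      using elim by (simp add: divide_right_mono add_divide_distrib[symmetric] sum_divide_distrib[symmetric])
  qed
qed

lemma second_negligible_of_scaling:
  assumes tail_pos: "eventually (\<lambda>y. 0 < tail_max y) at_top"
    and star: "\<And>i j t. i \<in> {1..n} \<Longrightarrow> j \<in> {1..n} \<Longrightarrow> i \<noteq> j \<Longrightarrow> 0 < t \<Longrightarrow>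
       ((\<lambda>x. prob {w \<in> space M. \<bar>X i w\<bar> > t * h x \<and> X j w > x} / tail_max x) \<longlongrightarrow> 0) at_top"
    and tail_z: "eventually (\<lambda>y. tail_max (y / (1 + K)) \<le> D * tail_max y) at_top"
    and h_z: "eventually (\<lambda>y. h (y / (1 + K)) \<le> \<Lambda> * h y) at_top"
    and \<Lambda>: "0 < \<Lambda>" and K: "0 \<le> K" and \<delta>: "0 < \<delta>"
  shows "((\<lambda>y. prob {w \<in> space M. \<delta> * h y < ord_stat X n (n-1) w \<and>
           y < ord_stat X n n w + K * ord_stat X n (n-1) w} / tail_max y) \<longlongrightarrow> 0) at_top"
proof (rule tendsto_sandwich[OF _ _ tendsto_const])
  let ?S = "\<lambda>y. {w \<in> space M. \<delta> * h y < ord_stat X n (n-1) w \<and>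
           y < ord_stat X n n w + K * ord_stat X n (n-1) w}"
  let ?E = "\<lambda>y. {w \<in> space M. \<delta> * h y < ord_stat X n (n-1) w \<and> y / (1 + K) < ord_stat X n n w}"
  have "filterlim (\<lambda>y. (1 / (1 + K)) * y) at_top at_top"
    using K by (intro filterlim_tendsto_pos_mult_at_top[OF tendsto_const]) (auto simp: filterlim_ident)
  then have z: "filterlim (\<lambda>y. y / (1 + K)) at_top at_top" by simp
  show "((\<lambda>y. prob (?E y) / tail_max y) \<longlongrightarrow> 0) at_top"
    by (rule second_max_negligible[OF tail_pos star z tail_z h_z \<Lambda> \<delta>])
  show "eventually (\<lambda>y. 0 \<le> prob (?S y) / tail_max y) at_top"
    by (simp add: tail_max_nonneg)
  have "?S y \<subseteq> ?E y" for y
  proof safe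
    fix w assume w: "w \<in> space M" "\<delta> * h y < ord_stat X n (n-1) w"
      "y < ord_stat X n n w + K * ord_stat X n (n-1) w"
    have "ord_stat X n (n-1) w \<le> ord_stat X n n w" using n2 by (intro ord_stat_mono) auto
    then have "y < (1 + K) * ord_stat X n n w"
      using w(3) K mult_left_mono[of "ord_stat X n (n-1) w" "ord_stat X n n w" K] by (simp add: algebra_simps)
    then show "y / (1 + K) < ord_stat X n n w" using K by (simp add: divide_less_eq mult.commute)
  qed
  moreover have "?E y \<in> events" for y by measurable
  ultimately show "eventually (\<lambda>y. prob (?S y) / tail_max y \<le> prob (?E y) / tail_max y) at_top"
    by (intro always_eventually allI divide_right_mono finite_measure_mono tail_max_nonneg) auto
qed

end

section \<open>Tail classes\<close>

definition shift_stable :: "(real \<Rightarrow> real) \<Rightarrow> (real \<Rightarrow> real) \<Rightarrow> bool" where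
  "shift_stable Fb h \<longleftrightarrow> (\<forall>\<epsilon>>0. \<exists>\<eta>>0. eventually (\<lambda>y.
     Fb (y - \<eta> * h y) \<le> (1 + \<epsilon>) * Fb y \<and> (1 - \<epsilon>) * Fb y \<le> Fb (y + \<eta> * h y)) at_top)"

lemma dominatedly_varying_bound:
  assumes "dominatedly_varying g" "0 < \<rho>"
  obtains B where "0 < B" "eventually (\<lambda>y. g (\<rho> * y) \<le> B * g y) at_top"
proof -
  have "Limsup at_top (\<lambda>x. ereal (g (x * \<rho>) / g x)) < \<infinity>"
    using assms unfolding dominatedly_varying_def by blast
  then obtain B where "0 < B" "eventually (\<lambda>x. g (x * \<rho>) / g x < B) at_top"
    by (rule eventually_less_of_Limsup_less_infinity)
  moreover have "eventually (\<lambda>x. 0 < g x) at_top"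
    using assms unfolding dominatedly_varying_def by blast
  ultimately have "eventually (\<lambda>y. g (\<rho> * y) \<le> B * g y) at_top"
    by (auto elim: eventually_elim2 simp: pos_divide_less_eq mult.commute)
  with \<open>0 < B\<close> show ?thesis by (rule that)
qed

lemma eventually_le_half_of_smallo:
  fixes h :: "real \<Rightarrow> real"
  assumes "h \<in> o[at_top](\<lambda>x. x)" "0 \<le> \<kappa>"
  shows "eventually (\<lambda>x. \<kappa> * h x \<le> x / 2) at_top"
proof -
  have "eventually (\<lambda>x. norm (h x) \<le> (1 / (2 * (\<kappa> + 1))) * norm x) at_top"
    using landau_o.smallD[OF assms(1), of "1 / (2 * (\<kappa> + 1))"] assms(2) by simp
  then show ?thesis using eventually_gt_at_top[of "0::real"]
  proof eventually_elim
    case (elim x)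
    have "\<kappa> * h x \<le> \<kappa> * ((1 / (2 * (\<kappa> + 1))) * x)"
      using elim assms(2) by (intro mult_left_mono) auto
    also have "\<dots> = (\<kappa> / (\<kappa> + 1)) * (x / 2)" using assms(2) by (simp add: field_simps)
    also have "\<dots> \<le> x / 2" using assms(2) elim by (intro mult_left_le_one_le) auto
    finally show ?case .
  qed
qed

lemma H_class_h_less:
  assumes "H_class Fb h"
  shows "eventually (\<lambda>x. h x < x) at_top"
proof -
  have "eventually (\<lambda>x. 1 * h x \<le> x / 2) at_top"
    using assms unfolding H_class_def by (intro eventually_le_half_of_smallo) auto
  with eventually_gt_at_top[of 0] show ?thesis by eventually_elim simp
qed

lemma H_class_shift_ratio:
  assumes "H_class Fb h" "eventually (\<lambda>y. 0 < Fb y) at_top"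
  shows "((\<lambda>x. Fb (x + c * h x) / Fb x) \<longlongrightarrow> 1) at_top"
  using assms unfolding H_class_def
  by (intro asymp_equivD_strong) (auto elim: eventually_mono)

lemma H_class_shift_stable:
  assumes "H_class Fb h" "eventually (\<lambda>y. 0 < Fb y) at_top"
  shows "shift_stable Fb h"
  unfolding shift_stable_def
proof (intro allI impI exI[of _ 1] conjI)
  fix \<epsilon> :: real assume "0 < \<epsilon>"
  have "eventually (\<lambda>x. Fb (x + (-1) * h x) \<le> (1 + \<epsilon>) * Fb x) at_top"
    using \<open>0 < \<epsilon>\<close>
    by (intro eventually_le_mult_of_ratio_tendsto[OF H_class_shift_ratio[OF assms] assms(2)]) simp
  moreover have "eventually (\<lambda>x. (1 - \<epsilon>) * Fb x \<le> Fb (x + 1 * h x)) at_top"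
    using \<open>0 < \<epsilon>\<close>
    by (intro eventually_mult_le_of_ratio_tendsto[OF H_class_shift_ratio[OF assms] assms(2)]) simp
  ultimately show "eventually (\<lambda>y. Fb (y - 1 * h y) \<le> (1 + \<epsilon>) * Fb y \<and> (1 - \<epsilon>) * Fb y \<le> Fb (y + 1 * h y)) at_top"
    by eventually_elim simp
qed simp

lemma H_class_shift_back:
  assumes H: "H_class Fb h" and tail_pos: "eventually (\<lambda>y. 0 < Fb y) at_top" and \<kappa>: "0 \<le> \<kappa>"
  obtains D \<Lambda> where "filterlim (\<lambda>y. y - \<kappa> * h y) at_top at_top"
    "eventually (\<lambda>y. Fb (y - \<kappa> * h y) \<le> D * Fb y) at_top"
    "0 < \<Lambda>" "eventually (\<lambda>y. h (y - \<kappa> * h y) \<le> \<Lambda> * h y) at_top"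
proof -
  have "eventually (\<lambda>x. x / 2 \<le> x - \<kappa> * h x) at_top"
    using eventually_le_half_of_smallo[OF _ \<kappa>] H unfolding H_class_def by (auto elim: eventually_mono)
  moreover have "filterlim (\<lambda>x::real. (1/2) * x) at_top at_top"
    by (intro filterlim_tendsto_pos_mult_at_top[OF tendsto_const]) (auto simp: filterlim_ident)
  ultimately have z: "filterlim (\<lambda>y. y - \<kappa> * h y) at_top at_top"
    by (auto intro: filterlim_at_top_mono)
  have "eventually (\<lambda>x. Fb (x + (-\<kappa>) * h x) \<le> 2 * Fb x) at_top"
    by (intro eventually_le_mult_of_ratio_tendsto[OF H_class_shift_ratio[OF H tail_pos] tail_pos]) simp
  then have tail_z: "eventually (\<lambda>y. Fb (y - \<kappa> * h y) \<le> 2 * Fb y) at_top" by simp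
  have "Limsup at_top (\<lambda>x. ereal (h (x + (-\<kappa>) * h x) / h x)) < \<infinity>"
    using H unfolding H_class_def by blast
  then obtain B where "0 < B" "eventually (\<lambda>x. h (x + (-\<kappa>) * h x) / h x < B) at_top"
    by (rule eventually_less_of_Limsup_less_infinity)
  moreover have "eventually (\<lambda>y. 0 < h y) at_top" using H unfolding H_class_def by blast
  ultimately have "eventually (\<lambda>y. h (y - \<kappa> * h y) \<le> B * h y) at_top"
    by (auto elim: eventually_elim2 simp: pos_divide_less_eq)
  with z tail_z \<open>0 < B\<close> show ?thesis by (rule that)
qed

lemma pos_of_upper_endpoint_infinity:
  assumes "upper_endpoint Fb = \<infinity>" "antimono Fb"
  shows "0 < Fb y"
proof (rule ccontr)
  assume "\<not> 0 < Fb y"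
  then have "x \<le> y" if "0 < Fb x" for x
    using that antimonoD[OF assms(2), of y x] by fastforce
  then have "upper_endpoint Fb \<le> ereal y"
    unfolding upper_endpoint_def by (auto intro!: Sup_least)
  then show False using assms(1) by simp
qed

lemma GMDA_tendsto:
  assumes "GMDA Fb h" "upper_endpoint Fb = \<infinity>"
  shows "((\<lambda>x. Fb (x + y * h x) / Fb x) \<longlongrightarrow> exp (- y)) at_top"
  using assms unfolding GMDA_def by simp

context
  fixes Fb h :: "real \<Rightarrow> real"
  assumes GMDA: "GMDA Fb h" and endpoint: "upper_endpoint Fb = \<infinity>"
    and antimono: "antimono Fb" and tendsto_0: "(Fb \<longlongrightarrow> 0) at_top"
begin

lemma GMDA_pos: "0 < Fb y"
  by (rule pos_of_upper_endpoint_infinity[OF endpoint antimono])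

lemma GMDA_eventually_pos: "eventually (\<lambda>y. 0 < Fb y) at_top"
  by (simp add: GMDA_pos)

text \<open>Eventually \<open>Fb (x - h x) \<le> 4 Fb x \<rightarrow> 0\<close>, whereas \<open>h x \<ge> x\<close> would give
  \<open>Fb (x - h x) \<ge> Fb 0 > 0\<close>.\<close>
lemma GMDA_h_less: "eventually (\<lambda>x. h x < x) at_top"
proof -
  have "((\<lambda>x. Fb (x + (-1) * h x) / Fb x) \<longlongrightarrow> exp 1) at_top"
    using GMDA_tendsto[OF GMDA endpoint, of "-1"] by simp
  then have "eventually (\<lambda>x. Fb (x + (-1) * h x) \<le> 4 * Fb x) at_top"
    using exp_le by (intro eventually_le_mult_of_ratio_tendsto[OF _ GMDA_eventually_pos]) auto
  moreover have "eventually (\<lambda>x. Fb x < Fb 0 / 4) at_top"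
    using GMDA_pos[of 0] by (intro order_tendstoD(2)[OF tendsto_0]) simp
  ultimately show ?thesis using eventually_ge_at_top[of 0]
  proof eventually_elim
    case (elim x)
    show "h x < x"
    proof (rule ccontr)
      assume "\<not> h x < x"
      then have "Fb 0 \<le> Fb (x + (-1) * h x)" by (intro antimonoD[OF antimono]) simp
      then show False using elim by simp
    qed
  qed
qed

lemma GMDA_shift_stable: "shift_stable Fb h"
  unfolding shift_stable_def
proof (intro allI impI)
  fix \<epsilon> :: real assume \<epsilon>: "0 < \<epsilon>"
  define \<eta> where "\<eta> = ln (1 + \<epsilon>/2)"
  have \<eta>: "0 < \<eta>" "exp \<eta> = 1 + \<epsilon>/2" unfolding \<eta>_def using \<epsilon> by simp_all
  have "eventually (\<lambda>x. Fb (x + (-\<eta>) * h x) \<le> (1 + \<epsilon>) * Fb x) at_top"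
    using GMDA_tendsto[OF GMDA endpoint, of "-\<eta>"] \<eta> \<epsilon>
    by (intro eventually_le_mult_of_ratio_tendsto[OF _ GMDA_eventually_pos]) auto
  moreover have "1 - \<epsilon> < exp (-\<eta>)"
  proof -
    have "exp (-\<eta>) = 1 / (1 + \<epsilon>/2)" using \<eta> by (simp add: exp_minus inverse_eq_divide)
    moreover have "(1 - \<epsilon>) * (1 + \<epsilon>/2) < 1" using \<epsilon> by (simp add: algebra_simps) (simp add: add_pos_nonneg)
    ultimately show ?thesis using \<epsilon> by (simp only:) (simp add: field_simps)
  qed
  then have "eventually (\<lambda>x. (1 - \<epsilon>) * Fb x \<le> Fb (x + \<eta> * h x)) at_top"
    by (intro eventually_mult_le_of_ratio_tendsto[OF GMDA_tendsto[OF GMDA endpoint] GMDA_eventually_pos])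
  ultimately show "\<exists>\<eta>>0. eventually (\<lambda>y. Fb (y - \<eta> * h y) \<le> (1 + \<epsilon>) * Fb y \<and>
      (1 - \<epsilon>) * Fb y \<le> Fb (y + \<eta> * h y)) at_top"
    using \<eta> by (intro exI[of _ \<eta>]) (auto elim: eventually_elim2)
qed

text \<open>Since \<open>Fb (y - \<kappa> h y) \<sim> e\<^sup>\<kappa> Fb y \<rightarrow> 0\<close>, the point \<open>y - \<kappa> h y\<close> escapes to infinity; and
  \<open>h\<close> cannot jump there, for \<open>y - \<kappa> h y + h (y - \<kappa> h y) > y + 3 h y\<close> would make the tail ratio
  \<open>e\<^sup>-\<^sup>1\<close> smaller than \<open>e\<^sup>-\<^sup>3\<^sup>-\<^sup>\<kappa>\<close>.\<close>
lemma GMDA_shift_back: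
  assumes h_pos: "\<forall>x. 0 < h x" and \<kappa>: "0 \<le> \<kappa>"
  obtains D \<Lambda> where "filterlim (\<lambda>y. y - \<kappa> * h y) at_top at_top"
    "eventually (\<lambda>y. Fb (y - \<kappa> * h y) \<le> D * Fb y) at_top"
    "0 < \<Lambda>" "eventually (\<lambda>y. h (y - \<kappa> * h y) \<le> \<Lambda> * h y) at_top"
proof -
  define z where "z = (\<lambda>y. y - \<kappa> * h y)"
  have ratio: "((\<lambda>x. Fb (z x) / Fb x) \<longlongrightarrow> exp \<kappa>) at_top"
    using GMDA_tendsto[OF GMDA endpoint, of "-\<kappa>"] unfolding z_def by simp
  have tail_z: "eventually (\<lambda>y. Fb (z y) \<le> (exp \<kappa> + 1) * Fb y) at_top"
    by (rule eventually_le_mult_of_ratio_tendsto[OF ratio GMDA_eventually_pos]) simp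
  have "((\<lambda>y. Fb (z y) / Fb y * Fb y) \<longlongrightarrow> exp \<kappa> * 0) at_top"
    by (rule tendsto_mult[OF ratio tendsto_0])
  moreover have "Fb (z y) / Fb y * Fb y = Fb (z y)" for y using GMDA_pos[of y] by simp
  ultimately have Fz: "((\<lambda>y. Fb (z y)) \<longlongrightarrow> 0) at_top" by simp
  have z: "filterlim z at_top at_top"
    unfolding filterlim_at_top
  proof
    fix B :: real
    have "eventually (\<lambda>y. Fb (z y) < Fb B) at_top" using order_tendstoD(2)[OF Fz GMDA_pos] .
    then show "eventually (\<lambda>y. B \<le> z y) at_top"
    proof (rule eventually_mono)
      fix y assume less: "Fb (z y) < Fb B"
      show "B \<le> z y"
      proof (rule ccontr)
        assume "\<not> B \<le> z y"
        then have "Fb B \<le> Fb (z y)" by (intro antimonoD[OF antimono]) simp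
        then show False using less by simp
      qed
    qed
  qed
  have "((\<lambda>y. Fb (z y + 1 * h (z y)) / Fb (z y)) \<longlongrightarrow> exp (-1)) at_top"
    using filterlim_compose[OF GMDA_tendsto[OF GMDA endpoint, of 1] z] by simp
  then have e1: "eventually (\<lambda>y. exp (-2) < Fb (z y + 1 * h (z y)) / Fb (z y)) at_top"
    by (rule order_tendstoD(1)) simp
  have "((\<lambda>y. (Fb (y + 3 * h y) / Fb y) / (Fb (z y) / Fb y)) \<longlongrightarrow> exp (-3) / exp \<kappa>) at_top"
    by (rule tendsto_divide[OF GMDA_tendsto[OF GMDA endpoint, of 3] ratio]) simp
  moreover have "(Fb (y + 3 * h y) / Fb y) / (Fb (z y) / Fb y) = Fb (y + 3 * h y) / Fb (z y)" for y
    using GMDA_pos[of y] by simp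
  ultimately have "((\<lambda>y. Fb (y + 3 * h y) / Fb (z y)) \<longlongrightarrow> exp (-3) / exp \<kappa>) at_top"
    by (simp only:)
  moreover have "exp (-3) / exp \<kappa> < exp (-2::real)"
  proof -
    have "exp (-3) / exp \<kappa> = exp (-3 - \<kappa>)" by (simp add: exp_diff)
    also have "\<dots> < exp (-2)" using \<kappa> by simp
    finally show ?thesis .
  qed
  ultimately have e2: "eventually (\<lambda>y. Fb (y + 3 * h y) / Fb (z y) < exp (-2)) at_top"
    by (rule order_tendstoD(2))
  have "eventually (\<lambda>y. h (z y) \<le> (\<kappa> + 3) * h y) at_top"
    using e1 e2
  proof eventually_elim
    case (elim y)
    show ?case
    proof (rule ccontr)
      assume "\<not> h (z y) \<le> (\<kappa> + 3) * h y"
      then have "y + 3 * h y \<le> z y + 1 * h (z y)" unfolding z_def by (simp add: algebra_simps)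
      then have "Fb (z y + 1 * h (z y)) / Fb (z y) \<le> Fb (y + 3 * h y) / Fb (z y)"
        using GMDA_pos[of "z y"] antimonoD[OF antimono] by (intro divide_right_mono) auto
      then show False using elim by simp
    qed
  qed
  moreover have "0 < \<kappa> + 3" using \<kappa> by simp
  ultimately show ?thesis using z tail_z that unfolding z_def by blast
qed

end

section \<open>Deterministic weights\<close>

lemma weighted_sum_gt_cases:
  fixes a c0 K s y m m2 :: real
  assumes "0 < a" "a \<le> c0" "0 \<le> K" "0 < s" "c0 * y < c0 * m + K * max m2 0"
  shows "y < m + s \<or> (a * s / (K + 1) < m2 \<and> y < m + K / a * m2)"
proof (cases "m2 \<le> a * s / (K + 1)")
  case True
  have "K * max m2 0 \<le> K * (a * s / (K + 1))"
    using True assms by (intro mult_left_mono) auto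
  also have "\<dots> = (K / (K + 1)) * (a * s)" by simp
  also have "\<dots> \<le> a * s" using assms by (intro mult_left_le_one_le) auto
  also have "\<dots> \<le> c0 * s" using assms by (intro mult_right_mono) auto
  finally have "c0 * y < c0 * (m + s)" using assms(5) by (simp add: algebra_simps)
  then show ?thesis using assms by auto
next
  case False
  moreover have "0 \<le> a * s / (K + 1)" using assms by simp
  ultimately have m2: "0 < m2" by linarith
  then have "c0 * y < c0 * (m + K / c0 * m2)" using assms by (simp add: algebra_simps)
  then have "y < m + K / c0 * m2" using assms by simp
  also have "K / c0 * m2 \<le> K / a * m2"
    using assms m2 by (intro mult_right_mono divide_left_mono) auto
  finally show ?thesis using False by auto
qed

text \<open>What the argument uses from each of the hypotheses (A), (B), (C); only the
  last assumption depends on \<open>(**)\<close> or on dominated variation.\<close>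
locale regular_max_tail = order_stat_model +
  fixes a b d :: real and h :: "real \<Rightarrow> real"
  assumes ab: "0 < a" "a \<le> b" and d: "0 \<le> d"
    and tail_pos: "eventually (\<lambda>y. 0 < tail M (ord_stat X n n) y) at_top"
    and h_pos: "eventually (\<lambda>y. 0 < h y) at_top"
    and h_less: "eventually (\<lambda>y. h y < y) at_top"
    and shift_stable: "shift_stable (tail M (ord_stat X n n)) h"
    and pair_negligible: "\<And>i j t. i \<in> {1..n} \<Longrightarrow> j \<in> {1..n} \<Longrightarrow> i \<noteq> j \<Longrightarrow> 0 < t \<Longrightarrow>
         ((\<lambda>x. prob {w \<in> space M. \<bar>X i w\<bar> > t * h x \<and> X j w > x} / tail M (ord_stat X n n) x)
           \<longlongrightarrow> 0) at_top"
    and second_negligible: "\<And>K \<delta>. 0 \<le> K \<Longrightarrow> 0 < \<delta> \<Longrightarrow> ((\<lambda>y. prob {w \<in> space M.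
         \<delta> * h y < ord_stat X n (n-1) w \<and> y < ord_stat X n n w + K * ord_stat X n (n-1) w}
         / tail M (ord_stat X n n) y) \<longlongrightarrow> 0) at_top"
begin

text \<open>The weights \<open>c\<close> range over the values of \<open>(C\<^sub>0, \<dots>, C\<^sub>n\<^sub>-\<^sub>1)\<close> allowed by the
  hypotheses; the alternative of nonnegative observations is encoded almost surely.\<close>
definition admissible :: "(nat \<Rightarrow> real) \<Rightarrow> bool" where
  "admissible c \<longleftrightarrow> a \<le> c 0 \<and> c 0 \<le> b \<and> (\<forall>i\<in>{1..n-1}. \<bar>c i\<bar> \<le> d) \<and>
     ((\<forall>i\<in>{1..n-1}. 0 \<le> c i) \<or> (AE w in M. \<forall>i\<in>{1..n}. 0 \<le> X i w))"

lemma prob_scaled_max_gt: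
  assumes "0 < c0"
  shows "prob {w \<in> space M. x < c0 * ord_stat X n n w} = tail_max (x / c0)"
  unfolding tail_def using assms
  by (intro arg_cong[where f=prob] Collect_cong conj_cong refl) (simp add: pos_divide_less_eq mult.commute)

lemma weighted_sum_measurable:
  "(\<lambda>w. \<Sum>i=0..n-1. c i * ord_stat X n (n-i) w) \<in> borel_measurable M"
proof (rule borel_measurable_sum)
  fix i assume "i \<in> {0..n-1}"
  then have "ord_stat X n (n-i) \<in> borel_measurable M" using n2 by (intro ord_stat_borel_measurable) auto
  then show "(\<lambda>w. c i * ord_stat X n (n-i) w) \<in> borel_measurable M" by measurable
qed

lemma weighted_sum_tail_le:
  assumes c: "admissible c" and \<eta>: "0 < \<eta>" and hy: "0 < h y"
  defines "K \<equiv> real (n-1) * d"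
  shows "prob {w \<in> space M. c 0 * y < (\<Sum>i=0..n-1. c i * ord_stat X n (n-i) w)}
    \<le> tail_max (y - \<eta> * h y) + prob {w \<in> space M. a * (\<eta> * h y) / (K + 1) < ord_stat X n (n-1) w \<and>
        y < ord_stat X n n w + K / a * ord_stat X n (n-1) w}"
    (is "prob ?S \<le> _ + prob ?U")
proof -
  let ?T = "{w \<in> space M. y - \<eta> * h y < ord_stat X n n w}"
  have c0: "a \<le> c 0" and cd: "\<forall>i\<in>{1..n-1}. \<bar>c i\<bar> \<le> d"
    and sign: "AE w in M. (\<forall>i\<in>{1..n-1}. 0 \<le> c i) \<or> (\<forall>i\<in>{1..n}. 0 \<le> X i w)"
    using c unfolding admissible_def by auto
  have K: "0 \<le> K" unfolding K_def using d by simp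
  have "AE w in M. w \<in> ?S \<longrightarrow> w \<in> ?T \<union> ?U"
    using sign
  proof (rule eventually_mono, intro impI)
    fix w assume sign_w: "(\<forall>i\<in>{1..n-1}. 0 \<le> c i) \<or> (\<forall>i\<in>{1..n}. 0 \<le> X i w)" and "w \<in> ?S"
    then have "c 0 * y < c 0 * ord_stat X n n w + K * max (ord_stat X n (n-1) w) 0"
      using sum_lower_weighted_ord_stat_le[of n d c X w, OF n2 d cd sign_w] sum_weighted_ord_stat_split[of n c X w] n2
      unfolding K_def by auto
    from weighted_sum_gt_cases[OF ab(1) c0 K mult_pos_pos[OF \<eta> hy] this]
    show "w \<in> ?T \<union> ?U" using \<open>w \<in> ?S\<close> by (auto simp: mult.commute)
  qed
  moreover have T: "?T \<in> events" by measurable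
  moreover have U: "?U \<in> events" by measurable
  ultimately have "prob ?S \<le> prob (?T \<union> ?U)" by (intro finite_measure_mono_AE sets.Un)
  also have "\<dots> \<le> prob ?T + prob ?U" using T U by (rule measure_Un_le)
  finally show ?thesis unfolding tail_def .
qed

lemma weighted_sum_tail_ge:
  assumes c: "admissible c" and \<eta>: "0 < \<eta>" and hy: "0 < h y"
  defines "K \<equiv> real (n-1) * d" and "t \<equiv> a * \<eta> / (real (n-1) * d + 1)"
  shows "tail_max (y + \<eta> * h y) - prob (pair_event (t * h y) y)
    \<le> prob {w \<in> space M. c 0 * y < (\<Sum>i=0..n-1. c i * ord_stat X n (n-i) w)}"
    (is "_ - prob ?P \<le> prob ?S")
proof -
  let ?T = "{w \<in> space M. y + \<eta> * h y < ord_stat X n n w}"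
  have K: "0 \<le> K" unfolding K_def using d by simp
  have c0: "a \<le> c 0" and cd: "\<forall>i\<in>{1..n-1}. \<bar>c i\<bar> \<le> d"
    using c unfolding admissible_def by auto
  have Kt: "K * t \<le> c 0 * \<eta>"
  proof -
    have "K * t = (K / (K + 1)) * (a * \<eta>)" unfolding t_def K_def by simp
    also have "\<dots> \<le> a * \<eta>"
      using K ab \<eta> by (intro mult_left_le_one_le) auto
    also have "\<dots> \<le> c 0 * \<eta>" using c0 \<eta> by simp
    finally show ?thesis .
  qed
  have "?T - ?P \<subseteq> ?S"
  proof
    fix w assume w: "w \<in> ?T - ?P"
    obtain j where j: "j \<in> {1..n}" "ord_stat X n n w = X j w"
      by (rule ord_stat_attained[of n n X w]) (use n2 in auto)
    have "0 < \<eta> * h y" using \<eta> hy by simp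
    then have "y < X j w" using w j(2) by simp
    have others: "\<bar>X i w\<bar> \<le> t * h y" if i: "i \<in> {1..n}" "i \<noteq> j" for i
    proof (rule ccontr)
      assume "\<not> \<bar>X i w\<bar> \<le> t * h y"
      then have "w \<in> ?P" unfolding pair_event_def
        using w i j(1) \<open>y < X j w\<close> by (intro UN_I[where a=i] UN_I[where a=j]) auto
      then show False using w by simp
    qed
    have "- (K * (t * h y)) \<le> (\<Sum>i=1..n-1. c i * ord_stat X n (n-i) w)"
      unfolding K_def by (rule sum_lower_weighted_ord_stat_ge[OF n2 d cd j(1) j(2)[symmetric] others])
    moreover have "K * (t * h y) \<le> c 0 * (\<eta> * h y)"
      using mult_right_mono[OF Kt less_imp_le[OF hy]] by (simp add: mult.assoc)
    moreover have "c 0 * y + c 0 * (\<eta> * h y) < c 0 * ord_stat X n n w"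
      using w c0 ab by (simp add: distrib_left[symmetric])
    ultimately have "c 0 * y < c 0 * ord_stat X n n w + (\<Sum>i=1..n-1. c i * ord_stat X n (n-i) w)"
      by linarith
    then show "w \<in> ?S" using w n2 sum_weighted_ord_stat_split[of n c X w] by simp
  qed
  moreover have "?S \<in> events"
    using weighted_sum_measurable[of c] unfolding borel_measurable_iff_greater by blast
  ultimately have "prob (?T - ?P) \<le> prob ?S" by (rule finite_measure_mono)
  moreover have "prob ?T - prob ?P \<le> prob (?T - ?P)"
    using pair_event_sets by (simp add: finite_measure_Diff' finite_measure_mono)
  ultimately show ?thesis unfolding tail_def by simp
qed


lemma weighted_sum_tail_upper:
  assumes \<epsilon>: "0 < \<epsilon>"
  shows "eventually (\<lambda>x. \<forall>c. admissible c \<longrightarrow>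
    prob {w \<in> space M. x < (\<Sum>i=0..n-1. c i * ord_stat X n (n-i) w)}
      \<le> (1 + 2 * \<epsilon>) * prob {w \<in> space M. x < c 0 * ord_stat X n n w}) at_top"
proof -
  obtain \<eta> where \<eta>: "0 < \<eta>" and shift: "eventually (\<lambda>y.
      tail_max (y - \<eta> * h y) \<le> (1 + \<epsilon>) * tail_max y \<and>
      (1 - \<epsilon>) * tail_max y \<le> tail_max (y + \<eta> * h y)) at_top"
    using shift_stable \<epsilon> unfolding shift_stable_def by blast
  define K where "K = real (n-1) * d"
  have K: "0 \<le> K" unfolding K_def using d by simp
  let ?U = "\<lambda>y. prob {w \<in> space M. a * (\<eta> * h y) / (K + 1) < ord_stat X n (n-1) w \<and>
        y < ord_stat X n n w + K / a * ord_stat X n (n-1) w}"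
  have "((\<lambda>y. prob {w \<in> space M. (a * \<eta> / (K + 1)) * h y < ord_stat X n (n-1) w \<and>
        y < ord_stat X n n w + K / a * ord_stat X n (n-1) w} / tail_max y) \<longlongrightarrow> 0) at_top"
    using ab K \<eta> by (intro second_negligible) auto
  then have "eventually (\<lambda>y. ?U y \<le> \<epsilon> * tail_max y) at_top"
    using \<epsilon> by (intro eventually_le_mult_of_ratio_tendsto[OF _ tail_pos]) (simp_all add: mult.assoc)
  with shift h_pos have "eventually (\<lambda>y. tail_max (y - \<eta> * h y) \<le> (1 + \<epsilon>) * tail_max y \<and>
      ?U y \<le> \<epsilon> * tail_max y \<and> 0 < h y) at_top"
    by eventually_elim auto
  from eventually_at_top_divide_uniform[OF ab(1) this, of b]
  show ?thesis
  proof eventually_elim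
    case (elim x)
    show ?case
    proof (intro allI impI)
      fix c assume c: "admissible c"
      then have c0: "a \<le> c 0" "c 0 \<le> b" unfolding admissible_def by auto
      define y where "y = x / c 0"
      have x: "x = c 0 * y" unfolding y_def using c0 ab by simp
      have Py: "tail_max (y - \<eta> * h y) \<le> (1 + \<epsilon>) * tail_max y \<and> ?U y \<le> \<epsilon> * tail_max y \<and> 0 < h y"
        using elim c0 unfolding y_def by blast
      have "prob {w \<in> space M. x < (\<Sum>i=0..n-1. c i * ord_stat X n (n-i) w)}
          \<le> tail_max (y - \<eta> * h y) + ?U y"
        unfolding x K_def using Py by (intro weighted_sum_tail_le[OF c \<eta>]) auto
      also have "\<dots> \<le> (1 + 2 * \<epsilon>) * tail_max y"
        using Py by (simp add: algebra_simps)
      also have "tail_max y = prob {w \<in> space M. x < c 0 * ord_stat X n n w}"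
        unfolding y_def using c0 ab by (simp add: prob_scaled_max_gt)
      finally show "prob {w \<in> space M. x < (\<Sum>i=0..n-1. c i * ord_stat X n (n-i) w)}
          \<le> (1 + 2 * \<epsilon>) * prob {w \<in> space M. x < c 0 * ord_stat X n n w}" .
    qed
  qed
qed

lemma weighted_sum_tail_lower:
  assumes \<epsilon>: "0 < \<epsilon>"
  shows "eventually (\<lambda>x. \<forall>c. admissible c \<longrightarrow>
    (1 - 2 * \<epsilon>) * prob {w \<in> space M. x < c 0 * ord_stat X n n w}
      \<le> prob {w \<in> space M. x < (\<Sum>i=0..n-1. c i * ord_stat X n (n-i) w)}) at_top"
proof -
  obtain \<eta> where \<eta>: "0 < \<eta>" and shift: "eventually (\<lambda>y.
      tail_max (y - \<eta> * h y) \<le> (1 + \<epsilon>) * tail_max y \<and>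
      (1 - \<epsilon>) * tail_max y \<le> tail_max (y + \<eta> * h y)) at_top"
    using shift_stable \<epsilon> unfolding shift_stable_def by blast
  define t where "t = a * \<eta> / (real (n-1) * d + 1)"
  have "0 < t" unfolding t_def using ab d \<eta> by (simp add: add_nonneg_pos)
  then have "((\<lambda>y. prob (pair_event (t * h y) y) / tail_max y) \<longlongrightarrow> 0) at_top"
    by (intro pair_event_negligible tail_pos pair_negligible) auto
  then have "eventually (\<lambda>y. prob (pair_event (t * h y) y) \<le> \<epsilon> * tail_max y) at_top"
    using \<epsilon> by (intro eventually_le_mult_of_ratio_tendsto[OF _ tail_pos])
  with shift h_pos have "eventually (\<lambda>y. (1 - \<epsilon>) * tail_max y \<le> tail_max (y + \<eta> * h y) \<and>
      prob (pair_event (t * h y) y) \<le> \<epsilon> * tail_max y \<and> 0 < h y) at_top"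
    by eventually_elim auto
  from eventually_at_top_divide_uniform[OF ab(1) this, of b]
  show ?thesis
  proof eventually_elim
    case (elim x)
    show ?case
    proof (intro allI impI)
      fix c assume c: "admissible c"
      then have c0: "a \<le> c 0" "c 0 \<le> b" unfolding admissible_def by auto
      define y where "y = x / c 0"
      have x: "x = c 0 * y" unfolding y_def using c0 ab by simp
      have Py: "(1 - \<epsilon>) * tail_max y \<le> tail_max (y + \<eta> * h y) \<and>
          prob (pair_event (t * h y) y) \<le> \<epsilon> * tail_max y \<and> 0 < h y"
        using elim c0 unfolding y_def by blast
      have "(1 - 2 * \<epsilon>) * prob {w \<in> space M. x < c 0 * ord_stat X n n w} = (1 - 2 * \<epsilon>) * tail_max y"
        unfolding y_def using c0 ab by (simp add: prob_scaled_max_gt)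
      also have "\<dots> \<le> tail_max (y + \<eta> * h y) - prob (pair_event (t * h y) y)"
        using Py by (simp add: algebra_simps)
      also have "\<dots> \<le> prob {w \<in> space M. x < (\<Sum>i=0..n-1. c i * ord_stat X n (n-i) w)}"
        unfolding x t_def using Py by (intro weighted_sum_tail_ge[OF c \<eta>]) auto
      finally show "(1 - 2 * \<epsilon>) * prob {w \<in> space M. x < c 0 * ord_stat X n n w}
          \<le> prob {w \<in> space M. x < (\<Sum>i=0..n-1. c i * ord_stat X n (n-i) w)}" .
    qed
  qed
qed

lemma joint_tail_uniform:
  assumes \<epsilon>: "0 < \<epsilon>"
  shows "eventually (\<lambda>x. \<forall>c. admissible c \<longrightarrow> (\<forall>i\<in>{1..n}. \<forall>j\<in>{1..n}. i \<noteq> j \<longrightarrow>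
    prob {w \<in> space M. x < c 0 * X i w \<and> x < c 0 * X j w}
      \<le> \<epsilon> * prob {w \<in> space M. x < c 0 * ord_stat X n n w})) at_top"
proof -
  have "((\<lambda>y. prob (pair_event (1 * h y) y) / tail_max y) \<longlongrightarrow> 0) at_top"
    by (intro pair_event_negligible tail_pos pair_negligible) auto
  then have "eventually (\<lambda>y. prob (pair_event (1 * h y) y) \<le> \<epsilon> * tail_max y) at_top"
    using \<epsilon> by (intro eventually_le_mult_of_ratio_tendsto[OF _ tail_pos])
  with h_less have "eventually (\<lambda>y. prob (pair_event (1 * h y) y) \<le> \<epsilon> * tail_max y \<and> h y < y) at_top"
    by eventually_elim auto
  from eventually_at_top_divide_uniform[OF ab(1) this, of b]
  show ?thesis
  proof eventually_elim
    case (elim x)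
    show ?case
    proof (intro allI impI ballI)
      fix c i j assume c: "admissible c" and ij: "i \<in> {1..n}" "j \<in> {1..n}" "i \<noteq> j"
      then have c0: "a \<le> c 0" "c 0 \<le> b" unfolding admissible_def by auto
      define y where "y = x / c 0"
      have Py: "prob (pair_event (1 * h y) y) \<le> \<epsilon> * tail_max y" "h y < y"
        using elim c0 unfolding y_def by blast+
      have "{w \<in> space M. x < c 0 * X i w \<and> x < c 0 * X j w} \<subseteq> pair_event (1 * h y) y"
      proof safe
        fix w assume w: "w \<in> space M" "x < c 0 * X i w" "x < c 0 * X j w"
        then have "y < X i w" "y < X j w"
          using c0 ab unfolding y_def by (auto simp: pos_divide_less_eq mult.commute)
        then show "w \<in> pair_event (1 * h y) y"
          unfolding pair_event_def using w(1) ij Py(2)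
          by (intro UN_I[where a=i] UN_I[where a=j]) auto
      qed
      then have "prob {w \<in> space M. x < c 0 * X i w \<and> x < c 0 * X j w} \<le> \<epsilon> * tail_max y"
        using Py(1) pair_event_sets by (meson finite_measure_mono order.trans)
      also have "tail_max y = prob {w \<in> space M. x < c 0 * ord_stat X n n w}"
        unfolding y_def using c0 ab by (simp add: prob_scaled_max_gt)
      finally show "prob {w \<in> space M. x < c 0 * X i w \<and> x < c 0 * X j w}
          \<le> \<epsilon> * prob {w \<in> space M. x < c 0 * ord_stat X n n w}" .
    qed
  qed
qed

end

section \<open>Random weights\<close>

lemma (in prob_space) emeasure_indep_var_pair:
  assumes ind: "indep_var MA Y MB Z" and A: "A \<in> sets (MA \<Otimes>\<^sub>M MB)"
  shows "emeasure M {w \<in> space M. (Y w, Z w) \<in> A} =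
         (\<integral>\<^sup>+c. emeasure M {w \<in> space M. (c, Z w) \<in> A} \<partial>(distr M MA Y))"
proof -
  have Y: "Y \<in> measurable M MA" by (rule indep_var_rv1[OF ind])
  have Z: "Z \<in> measurable M MB" by (rule indep_var_rv2[OF ind])
  interpret PZ: prob_space "distr M MB Z" by (rule prob_space_distr[OF Z])
  have "emeasure M {w \<in> space M. (Y w, Z w) \<in> A} = emeasure (distr M (MA \<Otimes>\<^sub>M MB) (\<lambda>w. (Y w, Z w))) A"
    using Y Z A by (subst emeasure_distr) (auto intro!: arg_cong[where f="emeasure M"])
  also have "\<dots> = emeasure (distr M MA Y \<Otimes>\<^sub>M distr M MB Z) A"
    using indep_var_distribution_eq[THEN iffD1, OF ind] by simp
  also have "\<dots> = (\<integral>\<^sup>+c. emeasure (distr M MB Z) (Pair c -` A) \<partial>(distr M MA Y))"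
    using A by (intro PZ.emeasure_pair_measure_alt) simp
  also have "\<dots> = (\<integral>\<^sup>+c. emeasure M {w \<in> space M. (c, Z w) \<in> A} \<partial>(distr M MA Y))"
    using Z sets_Pair1[OF A] by (intro nn_integral_cong, subst emeasure_distr)
      (auto intro!: arg_cong[where f="emeasure M"])
  finally show ?thesis .
qed

lemma (in prob_space) indep_var_prob_le_of_AE:
  assumes ind: "indep_var MA Y MB Z"
    and A: "A \<in> sets (MA \<Otimes>\<^sub>M MB)" and B: "B \<in> sets (MA \<Otimes>\<^sub>M MB)" and k: "0 \<le> k"
    and ae: "AE c in distr M MA Y. prob {w \<in> space M. (c, Z w) \<in> A} \<le> k * prob {w \<in> space M. (c, Z w) \<in> B}"
  shows "prob {w \<in> space M. (Y w, Z w) \<in> A} \<le> k * prob {w \<in> space M. (Y w, Z w) \<in> B}"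
proof -
  have Z: "Z \<in> measurable M MB" by (rule indep_var_rv2[OF ind])
  interpret PZ: prob_space "distr M MB Z" by (rule prob_space_distr[OF Z])
  have B_measurable: "(\<lambda>c. emeasure M {w \<in> space M. (c, Z w) \<in> B}) \<in> borel_measurable (distr M MA Y)"
  proof -
    have "(\<lambda>c. emeasure (distr M MB Z) (Pair c -` B)) \<in> borel_measurable (distr M MA Y)"
      using B by (intro PZ.measurable_emeasure_Pair) simp
    moreover have "emeasure (distr M MB Z) (Pair c -` B) = emeasure M {w \<in> space M. (c, Z w) \<in> B}" for c
      using Z sets_Pair1[OF B] by (subst emeasure_distr) (auto intro!: arg_cong[where f="emeasure M"])
    ultimately show ?thesis by simp
  qed
  have "ennreal (prob {w \<in> space M. (Y w, Z w) \<in> A})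
      = (\<integral>\<^sup>+c. emeasure M {w \<in> space M. (c, Z w) \<in> A} \<partial>(distr M MA Y))"
    by (simp add: emeasure_eq_measure[symmetric] emeasure_indep_var_pair[OF ind A])
  also have "\<dots> \<le> (\<integral>\<^sup>+c. ennreal k * emeasure M {w \<in> space M. (c, Z w) \<in> B} \<partial>(distr M MA Y))"
    using ae k by (intro nn_integral_mono_AE)
      (auto elim!: eventually_mono simp: emeasure_eq_measure ennreal_mult[symmetric] ennreal_leI)
  also have "\<dots> = ennreal k * emeasure M {w \<in> space M. (Y w, Z w) \<in> B}"
    by (simp add: nn_integral_cmult[OF B_measurable] emeasure_indep_var_pair[OF ind B])
  also have "\<dots> = ennreal (k * prob {w \<in> space M. (Y w, Z w) \<in> B})"
    using k by (simp add: emeasure_eq_measure ennreal_mult)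
  finally show ?thesis
    using k by (simp add: ennreal_le_iff2) (meson measure_nonneg mult_nonneg_nonneg order.trans)
qed

lemma (in prob_space) sum_prob_le_prob_UN_plus_pairs:
  assumes I: "finite I" and A: "\<And>i. i \<in> I \<Longrightarrow> A i \<in> events"
  shows "(\<Sum>i\<in>I. prob (A i)) \<le> prob (\<Union>i\<in>I. A i) + (\<Sum>i\<in>I. \<Sum>j\<in>I-{i}. prob (A i \<inter> A j))"
proof -
  define D where "D i = A i - (\<Union>j\<in>I-{i}. A j)" for i
  have D: "D i \<in> events" if "i \<in> I" for i unfolding D_def using A I that by auto
  have "prob (A i) \<le> prob (D i) + (\<Sum>j\<in>I-{i}. prob (A i \<inter> A j))" if i: "i \<in> I" for i
  proof -
    have "prob (A i) \<le> prob (D i \<union> (\<Union>j\<in>I-{i}. A i \<inter> A j))"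
      using A D I i by (intro finite_measure_mono sets.Un sets.finite_UN sets.Int) (auto simp: D_def)
    also have "\<dots> \<le> prob (D i) + prob (\<Union>j\<in>I-{i}. A i \<inter> A j)"
      using A D I i by (intro measure_Un_le) auto
    also have "prob (\<Union>j\<in>I-{i}. A i \<inter> A j) \<le> (\<Sum>j\<in>I-{i}. prob (A i \<inter> A j))"
      using A I i by (intro finite_measure_subadditive_finite) auto
    finally show ?thesis by simp
  qed
  then have "(\<Sum>i\<in>I. prob (A i)) \<le> (\<Sum>i\<in>I. prob (D i)) + (\<Sum>i\<in>I. \<Sum>j\<in>I-{i}. prob (A i \<inter> A j))"
    by (simp add: sum.distrib[symmetric] sum_mono)
  moreover have "(\<Sum>i\<in>I. prob (D i)) = prob (\<Union>i\<in>I. D i)"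
    using D I by (intro finite_measure_finite_Union[symmetric]) (auto simp: disjoint_family_on_def D_def)
  moreover have "prob (\<Union>i\<in>I. D i) \<le> prob (\<Union>i\<in>I. A i)"
    using A I by (intro finite_measure_mono) (auto simp: D_def)
  ultimately show ?thesis by linarith
qed

locale random_weights = regular_max_tail +
  fixes C :: "nat \<Rightarrow> 'a \<Rightarrow> real"
  assumes C_measurable: "\<And>i. i < n \<Longrightarrow> C i \<in> borel_measurable M"
    and indep: "prob_space.indep_var M
        (Pi\<^sub>M {..<n} (\<lambda>_. borel)) (\<lambda>w. \<lambda>i\<in>{..<n}. C i w)
        (Pi\<^sub>M {1..n} (\<lambda>_. borel)) (\<lambda>w. \<lambda>i\<in>{1..n}. X i w)"
    and C0: "prob {w \<in> space M. a \<le> C 0 w \<and> C 0 w \<le> b} = 1"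
    and Ci: "(\<forall>i\<in>{1..n-1}. prob {w \<in> space M. 0 \<le> C i w \<and> C i w \<le> d} = 1)
           \<or> ((\<forall>i\<in>{1..n}. AE w in M. X i w \<ge> 0) \<and>
              (\<forall>i\<in>{1..n-1}. prob {w \<in> space M. \<bar>C i w\<bar> \<le> d} = 1))"
begin

abbreviation "MC \<equiv> Pi\<^sub>M {..<n} (\<lambda>_. borel :: real measure)"
abbreviation "MX \<equiv> Pi\<^sub>M {1..n} (\<lambda>_. borel :: real measure)"
abbreviation "Cvec \<equiv> \<lambda>w. \<lambda>i\<in>{..<n}. C i w"
abbreviation "Xvec \<equiv> \<lambda>w. \<lambda>i\<in>{1..n}. X i w"
abbreviation "vec_ord_stat m z \<equiv> ord_stat (\<lambda>k (z :: nat \<Rightarrow> real). z k) n m z"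

lemma vec_ord_stat_Xvec: "vec_ord_stat m (Xvec w) = ord_stat X n m w"
  by (rule ord_stat_cong) simp

lemma AE_weight_component:
  assumes i: "i < n" and Q: "{x \<in> space borel. Q x} \<in> sets borel"
    and prob_1: "prob {w \<in> space M. Q (C i w)} = 1"
  shows "AE c in distr M MC Cvec. Q (c i)"
proof -
  have comp: "(\<lambda>c. c i) \<in> borel_measurable MC" using i by (intro measurable_component_singleton) simp
  have "{c \<in> space MC. Q (c i)} = (\<lambda>c. c i) -` {x \<in> space borel. Q x} \<inter> space MC" by auto
  also have "\<dots> \<in> sets MC" using Q by (rule measurable_sets[OF comp])
  finally have sets: "{c \<in> space MC. Q (c i)} \<in> sets MC" .
  have "AE w in M. Q (Cvec w i)"
    using AE_prob_1[OF prob_1] i by (auto elim: eventually_mono)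
  then show ?thesis using AE_distr_iff[OF indep_var_rv1[OF indep] sets] by simp
qed

lemma AE_admissible: "AE c in distr M MC Cvec. admissible c"
proof -
  have lower: "i < n" if "i \<in> {1..n-1}" for i using that n2 by auto
  have "AE c in distr M MC Cvec. a \<le> c 0 \<and> c 0 \<le> b"
    using n2 by (intro AE_weight_component[OF _ _ C0]) auto
  moreover have "AE c in distr M MC Cvec. \<forall>i\<in>{1..n-1}. \<bar>c i\<bar> \<le> d \<and>
      ((\<forall>i\<in>{1..n-1}. 0 \<le> c i) \<or> (AE w in M. \<forall>i\<in>{1..n}. 0 \<le> X i w))"
  proof (cases "\<forall>i\<in>{1..n-1}. prob {w \<in> space M. 0 \<le> C i w \<and> C i w \<le> d} = 1")
    case True
    then have "AE c in distr M MC Cvec. \<forall>i\<in>{1..n-1}. 0 \<le> c i \<and> c i \<le> d"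
      using lower by (intro AE_finite_allI AE_weight_component) auto
    then show ?thesis by (rule eventually_mono) auto
  next
    case False
    then have X: "AE w in M. \<forall>i\<in>{1..n}. 0 \<le> X i w"
      and bounded: "\<forall>i\<in>{1..n-1}. prob {w \<in> space M. \<bar>C i w\<bar> \<le> d} = 1"
      using Ci by (auto intro: AE_finite_allI)
    have "AE c in distr M MC Cvec. \<forall>i\<in>{1..n-1}. \<bar>c i\<bar> \<le> d"
      using lower bounded by (intro AE_finite_allI AE_weight_component) auto
    then show ?thesis using X by (auto elim: eventually_mono)
  qed
  ultimately show ?thesis unfolding admissible_def by eventually_elim auto
qed

lemma prob_le_of_admissible:
  fixes \<Phi> \<Psi> :: "(nat \<Rightarrow> real) \<Rightarrow> (nat \<Rightarrow> real) \<Rightarrow> bool"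
  assumes \<Phi>: "{p \<in> space (MC \<Otimes>\<^sub>M MX). \<Phi> (fst p) (snd p)} \<in> sets (MC \<Otimes>\<^sub>M MX)"
    and \<Psi>: "{p \<in> space (MC \<Otimes>\<^sub>M MX). \<Psi> (fst p) (snd p)} \<in> sets (MC \<Otimes>\<^sub>M MX)"
    and k: "0 \<le> k"
    and bound: "\<And>c. admissible c \<Longrightarrow>
      prob {w \<in> space M. \<Phi> c (Xvec w)} \<le> k * prob {w \<in> space M. \<Psi> c (Xvec w)}"
  shows "prob {w \<in> space M. \<Phi> (Cvec w) (Xvec w)} \<le> k * prob {w \<in> space M. \<Psi> (Cvec w) (Xvec w)}"
proof -
  have Xvec: "Xvec w \<in> space MX" if "w \<in> space M" for w
    using measurable_space[OF indep_var_rv2[OF indep] that] .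
  have Cvec: "Cvec w \<in> space MC" if "w \<in> space M" for w
    using measurable_space[OF indep_var_rv1[OF indep] that] .
  have slice: "{w \<in> space M. (c, Xvec w) \<in> {p \<in> space (MC \<Otimes>\<^sub>M MX). \<Theta> (fst p) (snd p)}}
      = {w \<in> space M. \<Theta> c (Xvec w)}" if "c \<in> space MC" for c \<Theta>
    using that Xvec by (auto simp: space_pair_measure)
  have "AE c in distr M MC Cvec. prob {w \<in> space M. (c, Xvec w) \<in> {p \<in> space (MC \<Otimes>\<^sub>M MX). \<Phi> (fst p) (snd p)}}
      \<le> k * prob {w \<in> space M. (c, Xvec w) \<in> {p \<in> space (MC \<Otimes>\<^sub>M MX). \<Psi> (fst p) (snd p)}}"
    using AE_admissible AE_space
  proof eventually_elim
    case (elim c)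
    then have c: "c \<in> space MC" by simp
    show ?case unfolding slice[OF c] by (rule bound[OF elim(1)])
  qed
  moreover have "{w \<in> space M. (Cvec w, Xvec w) \<in> {p \<in> space (MC \<Otimes>\<^sub>M MX). \<Theta> (fst p) (snd p)}}
      = {w \<in> space M. \<Theta> (Cvec w) (Xvec w)}" for \<Theta>
    using Xvec Cvec by (auto simp: space_pair_measure)
  ultimately show ?thesis using indep_var_prob_le_of_AE[OF indep \<Phi> \<Psi> k] by simp
qed


lemma sum_Cvec: "(\<Sum>i=0..n-1. Cvec w i * f i) = (\<Sum>i=0..n-1. C i w * f i)"
  using n2 by (intro sum.cong) auto

lemma Cvec_0: "Cvec w 0 = C 0 w"
  using n2 by simp

lemma vec_ord_stat_measurable:
  assumes "1 \<le> m" "m \<le> n"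
  shows "(\<lambda>p. vec_ord_stat m (snd p)) \<in> borel_measurable (MC \<Otimes>\<^sub>M MX)"
proof -
  have "vec_ord_stat m \<in> borel_measurable MX"
    using assms by (intro ord_stat_measurable measurable_component_singleton) auto
  then show ?thesis by (rule measurable_compose[OF measurable_snd])
qed

lemma weight_measurable: "i < n \<Longrightarrow> (\<lambda>p. fst p i) \<in> borel_measurable (MC \<Otimes>\<^sub>M MX)"
  by (intro measurable_compose[OF measurable_fst] measurable_component_singleton) auto

lemma scaled_max_product_sets:
  "{p \<in> space (MC \<Otimes>\<^sub>M MX). x < fst p 0 * vec_ord_stat n (snd p)} \<in> sets (MC \<Otimes>\<^sub>M MX)"
proof -
  have [measurable]: "(\<lambda>p. fst p 0) \<in> borel_measurable (MC \<Otimes>\<^sub>M MX)"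
    "(\<lambda>p. vec_ord_stat n (snd p)) \<in> borel_measurable (MC \<Otimes>\<^sub>M MX)"
    using weight_measurable[of 0] vec_ord_stat_measurable[of n] n2 by auto
  show ?thesis by measurable
qed

lemma weighted_sum_product_sets:
  "{p \<in> space (MC \<Otimes>\<^sub>M MX). x < (\<Sum>i=0..n-1. fst p i * vec_ord_stat (n-i) (snd p))} \<in> sets (MC \<Otimes>\<^sub>M MX)"
proof -
  have "(\<lambda>p. \<Sum>i=0..n-1. fst p i * vec_ord_stat (n-i) (snd p)) \<in> borel_measurable (MC \<Otimes>\<^sub>M MX)"
    using n2 by (intro borel_measurable_sum borel_measurable_times weight_measurable vec_ord_stat_measurable) auto
  then show ?thesis by measurable
qed

lemma random_weighted_sum_tail_upper:
  assumes "0 < \<epsilon>"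
  shows "eventually (\<lambda>x. prob {w \<in> space M. x < (\<Sum>i=0..n-1. C i w * ord_stat X n (n-i) w)}
      \<le> (1 + 2 * \<epsilon>) * prob {w \<in> space M. x < C 0 w * ord_stat X n n w}) at_top"
  using weighted_sum_tail_upper[OF assms]
proof eventually_elim
  case (elim x)
  have "prob {w \<in> space M. x < (\<Sum>i=0..n-1. Cvec w i * vec_ord_stat (n-i) (Xvec w))}
      \<le> (1 + 2 * \<epsilon>) * prob {w \<in> space M. x < Cvec w 0 * vec_ord_stat n (Xvec w)}"
  proof (rule prob_le_of_admissible[OF weighted_sum_product_sets scaled_max_product_sets])
    fix c assume "admissible c"
    then show "prob {w \<in> space M. x < (\<Sum>i=0..n-1. c i * vec_ord_stat (n-i) (Xvec w))}
        \<le> (1 + 2 * \<epsilon>) * prob {w \<in> space M. x < c 0 * vec_ord_stat n (Xvec w)}"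
      unfolding vec_ord_stat_Xvec using elim by blast
  qed (use assms in simp)
  then show ?case by (simp only: vec_ord_stat_Xvec sum_Cvec Cvec_0)
qed

lemma random_weighted_sum_tail_lower:
  assumes \<epsilon>: "0 < \<epsilon>" "\<epsilon> < 1/2"
  shows "eventually (\<lambda>x. (1 - 2 * \<epsilon>) * prob {w \<in> space M. x < C 0 w * ord_stat X n n w}
      \<le> prob {w \<in> space M. x < (\<Sum>i=0..n-1. C i w * ord_stat X n (n-i) w)}) at_top"
  using weighted_sum_tail_lower[OF \<epsilon>(1)]
proof eventually_elim
  case (elim x)
  have pos: "0 < 1 - 2 * \<epsilon>" using \<epsilon> by simp
  have "prob {w \<in> space M. x < Cvec w 0 * vec_ord_stat n (Xvec w)}
      \<le> 1 / (1 - 2 * \<epsilon>) * prob {w \<in> space M. x < (\<Sum>i=0..n-1. Cvec w i * vec_ord_stat (n-i) (Xvec w))}"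
  proof (rule prob_le_of_admissible[OF scaled_max_product_sets weighted_sum_product_sets])
    fix c assume "admissible c"
    then have "(1 - 2 * \<epsilon>) * prob {w \<in> space M. x < c 0 * vec_ord_stat n (Xvec w)}
        \<le> prob {w \<in> space M. x < (\<Sum>i=0..n-1. c i * vec_ord_stat (n-i) (Xvec w))}"
      unfolding vec_ord_stat_Xvec using elim by blast
    then show "prob {w \<in> space M. x < c 0 * vec_ord_stat n (Xvec w)}
        \<le> 1 / (1 - 2 * \<epsilon>) * prob {w \<in> space M. x < (\<Sum>i=0..n-1. c i * vec_ord_stat (n-i) (Xvec w))}"
      using pos by (simp add: field_simps)
  qed (use pos in simp)
  then show ?case using pos by (simp only: vec_ord_stat_Xvec sum_Cvec Cvec_0) (simp add: field_simps)
qed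

lemma random_joint_tail:
  assumes "0 < \<epsilon>"
  shows "eventually (\<lambda>x. \<forall>i\<in>{1..n}. \<forall>j\<in>{1..n}. i \<noteq> j \<longrightarrow>
    prob {w \<in> space M. x < C 0 w * X i w \<and> x < C 0 w * X j w}
      \<le> \<epsilon> * prob {w \<in> space M. x < C 0 w * ord_stat X n n w}) at_top"
  using joint_tail_uniform[OF assms]
proof eventually_elim
  case (elim x)
  show ?case
  proof (intro ballI impI)
    fix i j assume ij: "i \<in> {1..n}" "j \<in> {1..n}" "i \<noteq> j"
    have [measurable]: "(\<lambda>p. fst p 0) \<in> borel_measurable (MC \<Otimes>\<^sub>M MX)"
      "(\<lambda>p. snd p i) \<in> borel_measurable (MC \<Otimes>\<^sub>M MX)" "(\<lambda>p. snd p j) \<in> borel_measurable (MC \<Otimes>\<^sub>M MX)"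
      using n2 ij by (auto intro!: weight_measurable measurable_compose[OF measurable_snd]
          measurable_component_singleton)
    have Xvec: "Xvec w i = X i w" "Xvec w j = X j w" for w using ij by simp_all
    have "prob {w \<in> space M. x < Cvec w 0 * Xvec w i \<and> x < Cvec w 0 * Xvec w j}
        \<le> \<epsilon> * prob {w \<in> space M. x < Cvec w 0 * vec_ord_stat n (Xvec w)}"
    proof (rule prob_le_of_admissible[OF _ scaled_max_product_sets])
      fix c assume "admissible c"
      then show "prob {w \<in> space M. x < c 0 * Xvec w i \<and> x < c 0 * Xvec w j}
          \<le> \<epsilon> * prob {w \<in> space M. x < c 0 * vec_ord_stat n (Xvec w)}"
        unfolding vec_ord_stat_Xvec Xvec using elim ij by blast
    qed (measurable, use assms in simp)
    then show "prob {w \<in> space M. x < C 0 w * X i w \<and> x < C 0 w * X j w}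
        \<le> \<epsilon> * prob {w \<in> space M. x < C 0 w * ord_stat X n n w}"
      by (simp only: vec_ord_stat_Xvec Cvec_0 Xvec)
  qed
qed


lemma AE_C0_bounds: "AE w in M. a \<le> C 0 w \<and> C 0 w \<le> b"
  using AE_prob_1[OF C0] by (auto elim: eventually_mono)

lemma C0_measurable[measurable]: "C 0 \<in> borel_measurable M"
  using n2 by (intro C_measurable) simp

lemma scaled_obs_sets: "i \<in> {1..n} \<Longrightarrow> {w \<in> space M. x < C 0 w * X i w} \<in> events"
  using X_measurable[of i] by measurable

lemma scaled_max_sets: "{w \<in> space M. x < C 0 w * ord_stat X n n w} \<in> events"
  by measurable

lemma eventually_scaled_max_tail_pos:
  "eventually (\<lambda>x. 0 < prob {w \<in> space M. x < C 0 w * ord_stat X n n w}) at_top"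
proof -
  have "filterlim (\<lambda>x. (1 / a) * x) at_top at_top"
    using ab by (intro filterlim_tendsto_pos_mult_at_top[OF tendsto_const]) (auto simp: filterlim_ident)
  then have "filterlim (\<lambda>x. x / a) at_top at_top" by simp
  then have "eventually (\<lambda>x. 0 < tail_max (x / a)) at_top"
    using tail_pos by (rule filterlim_iff[THEN iffD1, rule_format])
  with eventually_ge_at_top[of 0] show ?thesis
  proof eventually_elim
    case (elim x)
    have "AE w in M. w \<in> {w \<in> space M. x / a < ord_stat X n n w} \<longrightarrow>
        w \<in> {w \<in> space M. x < C 0 w * ord_stat X n n w}"
      using AE_C0_bounds
    proof (rule eventually_mono, intro impI)
      fix w assume C0w: "a \<le> C 0 w \<and> C 0 w \<le> b"
        and "w \<in> {w \<in> space M. x / a < ord_stat X n n w}"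
      then have w: "w \<in> space M" "x / a < ord_stat X n n w" by auto
      have "0 \<le> x / a" using elim ab by simp
      then have "0 \<le> ord_stat X n n w" using w by linarith
      then have "a * ord_stat X n n w \<le> C 0 w * ord_stat X n n w"
        using C0w by (intro mult_right_mono) auto
      moreover have "x < a * ord_stat X n n w" using w ab by (simp add: pos_divide_less_eq mult.commute)
      ultimately show "w \<in> {w \<in> space M. x < C 0 w * ord_stat X n n w}" using w by simp
    qed
    then have "tail_max (x / a) \<le> prob {w \<in> space M. x < C 0 w * ord_stat X n n w}"
      unfolding tail_def by (rule finite_measure_mono_AE[OF _ scaled_max_sets])
    then show ?case using elim by linarith
  qed
qed

lemma weighted_sum_tail_equiv:
  "(\<lambda>x. prob {w \<in> space M. (\<Sum>i=0..n-1. C i w * ord_stat X n (n-i) w) > x})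
     \<sim>[at_top] (\<lambda>x. prob {w \<in> space M. C 0 w * ord_stat X n n w > x})"
proof (rule asymp_equiv_of_relative_bounds[OF eventually_scaled_max_tail_pos])
  fix e :: real assume e: "0 < e"
  define \<epsilon> where "\<epsilon> = min (e/2) (1/4)"
  have \<epsilon>: "0 < \<epsilon>" "\<epsilon> < 1/2" "2 * \<epsilon> \<le> e" unfolding \<epsilon>_def using e by auto
  show "eventually (\<lambda>x. (1 - e) * prob {w \<in> space M. C 0 w * ord_stat X n n w > x}
      \<le> prob {w \<in> space M. (\<Sum>i=0..n-1. C i w * ord_stat X n (n-i) w) > x} \<and>
      prob {w \<in> space M. (\<Sum>i=0..n-1. C i w * ord_stat X n (n-i) w) > x}
      \<le> (1 + e) * prob {w \<in> space M. C 0 w * ord_stat X n n w > x}) at_top"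
    using random_weighted_sum_tail_upper[OF \<epsilon>(1)] random_weighted_sum_tail_lower[OF \<epsilon>(1,2)]
  proof eventually_elim
    case (elim x)
    let ?p = "prob {w \<in> space M. x < C 0 w * ord_stat X n n w}"
    have "(1 - e) * ?p \<le> (1 - 2 * \<epsilon>) * ?p" "(1 + 2 * \<epsilon>) * ?p \<le> (1 + e) * ?p"
      using \<epsilon> by (intro mult_right_mono; simp)+
    then show ?case using elim by auto
  qed
qed

lemma scaled_max_tail_eq_prob_UN:
  "prob {w \<in> space M. x < C 0 w * ord_stat X n n w} = prob (\<Union>i\<in>{1..n}. {w \<in> space M. x < C 0 w * X i w})"
proof (rule measure_eq_AE)
  show "AE w in M. w \<in> {w \<in> space M. x < C 0 w * ord_stat X n n w} \<longleftrightarrow>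
      w \<in> (\<Union>i\<in>{1..n}. {w \<in> space M. x < C 0 w * X i w})"
    using AE_C0_bounds
  proof (rule eventually_mono)
    fix w assume C0w: "a \<le> C 0 w \<and> C 0 w \<le> b"
    obtain j where j: "j \<in> {1..n}" "ord_stat X n n w = X j w"
      by (rule ord_stat_attained[of n n X w]) (use n2 in auto)
    have "C 0 w * X i w \<le> C 0 w * ord_stat X n n w" if "i \<in> {1..n}" for i
      using C0w ab le_ord_stat_max[OF that] by (intro mult_left_mono) auto
    then show "w \<in> {w \<in> space M. x < C 0 w * ord_stat X n n w} \<longleftrightarrow>
        w \<in> (\<Union>i\<in>{1..n}. {w \<in> space M. x < C 0 w * X i w})"
      using j by (auto intro: less_le_trans)
  qed
qed (use scaled_obs_sets scaled_max_sets in auto)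

lemma scaled_max_tail_equiv_sum:
  "(\<lambda>x. prob {w \<in> space M. C 0 w * ord_stat X n n w > x})
     \<sim>[at_top] (\<lambda>x. \<Sum>i=1..n. prob {w \<in> space M. C 0 w * X i w > x})"
proof (rule asymp_equiv_symI, rule asymp_equiv_of_relative_bounds[OF eventually_scaled_max_tail_pos])
  fix e :: real assume e: "0 < e"
  have "0 < e / real (n * n)" using e n2 by simp
  from random_joint_tail[OF this]
  show "eventually (\<lambda>x. (1 - e) * prob {w \<in> space M. C 0 w * ord_stat X n n w > x}
      \<le> (\<Sum>i=1..n. prob {w \<in> space M. C 0 w * X i w > x}) \<and>
      (\<Sum>i=1..n. prob {w \<in> space M. C 0 w * X i w > x})
      \<le> (1 + e) * prob {w \<in> space M. C 0 w * ord_stat X n n w > x}) at_top"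
  proof eventually_elim
    case (elim x)
    let ?p = "prob {w \<in> space M. x < C 0 w * ord_stat X n n w}"
    define A where "A i = {w \<in> space M. x < C 0 w * X i w}" for i
    have A: "A i \<in> events" if "i \<in> {1..n}" for i unfolding A_def using that by (rule scaled_obs_sets)
    have p: "?p = prob (\<Union>i\<in>{1..n}. A i)" unfolding A_def by (rule scaled_max_tail_eq_prob_UN)
    have "(\<Sum>j\<in>{1..n}-{i}. prob (A i \<inter> A j)) \<le> real n * (e / real (n * n) * ?p)" if i: "i \<in> {1..n}" for i
    proof -
      have "prob (A i \<inter> A j) \<le> e / real (n * n) * ?p" if j: "j \<in> {1..n}-{i}" for j
      proof -
        have "A i \<inter> A j = {w \<in> space M. x < C 0 w * X i w \<and> x < C 0 w * X j w}"
          unfolding A_def by auto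
        then show ?thesis using elim i j by auto
      qed
      then have "(\<Sum>j\<in>{1..n}-{i}. prob (A i \<inter> A j)) \<le> (\<Sum>j\<in>{1..n}-{i}. e / real (n * n) * ?p)"
        by (rule sum_mono)
      also have "\<dots> = real (n - 1) * (e / real (n * n) * ?p)" using i by simp
      also have "\<dots> \<le> real n * (e / real (n * n) * ?p)" using e by (intro mult_right_mono) auto
      finally show ?thesis .
    qed
    then have "(\<Sum>i=1..n. \<Sum>j\<in>{1..n}-{i}. prob (A i \<inter> A j)) \<le> (\<Sum>i=1..n. real n * (e / real (n * n) * ?p))"
      by (rule sum_mono)
    also have "\<dots> = e * ?p" using n2 by simp
    finally have "(\<Sum>i=1..n. prob (A i)) \<le> (1 + e) * ?p"
      using sum_prob_le_prob_UN_plus_pairs[of "{1..n}" A] A p by (simp add: algebra_simps)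
    moreover have "?p \<le> (\<Sum>i=1..n. prob (A i))"
      unfolding p using A by (intro finite_measure_subadditive_finite) auto
    moreover have "(1 - e) * ?p \<le> ?p" using e by (simp add: algebra_simps)
    ultimately show ?case unfolding A_def by auto
  qed
qed

end

section \<open>The hypotheses (A), (B), (C)\<close>

context order_stat_model
begin

lemma regular_max_tail_of_GMDA:
  assumes ab: "0 < a" "a \<le> b" and d: "0 \<le> d"
    and h_pos: "\<forall>x. 0 < h x" and endpoint: "upper_endpoint tail_max = \<infinity>" and GMDA: "GMDA tail_max h"
    and star: "\<forall>i\<in>{1..n}. \<forall>j\<in>{1..n}. i \<noteq> j \<longrightarrow> (\<forall>t>0.
       ((\<lambda>x. prob {w \<in> space M. \<bar>X i w\<bar> > t * h x \<and> X j w > x} / tail_max x) \<longlongrightarrow> 0) at_top)"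
    and L: "0 < L" and star2: "\<forall>i\<in>{1..n}. \<forall>j\<in>{1..n}. i < j \<longrightarrow>
       ((\<lambda>x. prob {w \<in> space M. X i w > L * h x \<and> X j w > L * h x} / tail_max x) \<longlongrightarrow> 0) at_top"
  shows "regular_max_tail M n X a b d h"
proof (intro regular_max_tail.intro[OF order_stat_model_axioms] regular_max_tail_axioms.intro)
  note GMDA_facts = GMDA endpoint antimono_tail_max tail_max_tendsto_0
  show tail_pos: "eventually (\<lambda>y. 0 < tail_max y) at_top"
    by (rule GMDA_eventually_pos[OF GMDA_facts])
  show "eventually (\<lambda>y. h y < y) at_top" by (rule GMDA_h_less[OF GMDA_facts])
  show "shift_stable tail_max h" by (rule GMDA_shift_stable[OF GMDA_facts])
  show "eventually (\<lambda>y. 0 < h y) at_top" using h_pos by simp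
  fix K \<delta> :: real assume K: "0 \<le> K" and \<delta>: "0 < \<delta>"
  obtain D \<Lambda> where "filterlim (\<lambda>y. y - K * L * h y) at_top at_top"
    "eventually (\<lambda>y. tail_max (y - K * L * h y) \<le> D * tail_max y) at_top"
    "0 < \<Lambda>" "eventually (\<lambda>y. h (y - K * L * h y) \<le> \<Lambda> * h y) at_top"
    by (rule GMDA_shift_back[OF GMDA_facts h_pos, of "K * L"]) (use K L in auto)
  then show "((\<lambda>y. prob {w \<in> space M. \<delta> * h y < ord_stat X n (n-1) w \<and>
      y < ord_stat X n n w + K * ord_stat X n (n-1) w} / tail_max y) \<longlongrightarrow> 0) at_top"
    using star star2 K \<delta> by (intro second_negligible_of_joint_tail[OF tail_pos]) auto
qed (use ab d star in auto)

lemma regular_max_tail_of_H_class: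
  assumes ab: "0 < a" "a \<le> b" and d: "0 \<le> d"
    and long_tailed: "long_tailed tail_max" and H: "H_class tail_max h"
    and star: "\<forall>i\<in>{1..n}. \<forall>j\<in>{1..n}. i \<noteq> j \<longrightarrow> (\<forall>t>0.
       ((\<lambda>x. prob {w \<in> space M. \<bar>X i w\<bar> > t * h x \<and> X j w > x} / tail_max x) \<longlongrightarrow> 0) at_top)"
    and L: "0 < L" and star2: "\<forall>i\<in>{1..n}. \<forall>j\<in>{1..n}. i < j \<longrightarrow>
       ((\<lambda>x. prob {w \<in> space M. X i w > L * h x \<and> X j w > L * h x} / tail_max x) \<longlongrightarrow> 0) at_top"
  shows "regular_max_tail M n X a b d h"
proof (intro regular_max_tail.intro[OF order_stat_model_axioms] regular_max_tail_axioms.intro)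
  show tail_pos: "eventually (\<lambda>y. 0 < tail_max y) at_top"
    using long_tailed unfolding long_tailed_def eventually_at_top_linorder by blast
  show "eventually (\<lambda>y. h y < y) at_top" by (rule H_class_h_less[OF H])
  show "shift_stable tail_max h" by (rule H_class_shift_stable[OF H tail_pos])
  show "eventually (\<lambda>y. 0 < h y) at_top" using H unfolding H_class_def by blast
  fix K \<delta> :: real assume K: "0 \<le> K" and \<delta>: "0 < \<delta>"
  obtain D \<Lambda> where "filterlim (\<lambda>y. y - K * L * h y) at_top at_top"
    "eventually (\<lambda>y. tail_max (y - K * L * h y) \<le> D * tail_max y) at_top"
    "0 < \<Lambda>" "eventually (\<lambda>y. h (y - K * L * h y) \<le> \<Lambda> * h y) at_top"
    by (rule H_class_shift_back[OF H tail_pos, of "K * L"]) (use K L in auto)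
  then show "((\<lambda>y. prob {w \<in> space M. \<delta> * h y < ord_stat X n (n-1) w \<and>
      y < ord_stat X n n w + K * ord_stat X n (n-1) w} / tail_max y) \<longlongrightarrow> 0) at_top"
    using star star2 K \<delta> by (intro second_negligible_of_joint_tail[OF tail_pos]) auto
qed (use ab d star in auto)

text \<open>Here dominated variation of both the tail and \<open>h\<close> replaces the joint tail condition:
  the second largest observation is handled at the scale \<open>y / (1 + K)\<close>.\<close>
lemma regular_max_tail_of_dominated_variation:
  assumes ab: "0 < a" "a \<le> b" and d: "0 \<le> d"
    and long_tailed: "long_tailed tail_max" and tail_dv: "dominatedly_varying tail_max"
    and h_dv: "dominatedly_varying h" and H: "H_class tail_max h"
    and star: "\<forall>i\<in>{1..n}. \<forall>j\<in>{1..n}. i \<noteq> j \<longrightarrow> (\<forall>t>0.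
       ((\<lambda>x. prob {w \<in> space M. \<bar>X i w\<bar> > t * h x \<and> X j w > x} / tail_max x) \<longlongrightarrow> 0) at_top)"
  shows "regular_max_tail M n X a b d h"
proof (intro regular_max_tail.intro[OF order_stat_model_axioms] regular_max_tail_axioms.intro)
  show tail_pos: "eventually (\<lambda>y. 0 < tail_max y) at_top"
    using long_tailed unfolding long_tailed_def eventually_at_top_linorder by blast
  show "eventually (\<lambda>y. h y < y) at_top" by (rule H_class_h_less[OF H])
  show "shift_stable tail_max h" by (rule H_class_shift_stable[OF H tail_pos])
  show "eventually (\<lambda>y. 0 < h y) at_top" using H unfolding H_class_def by blast
  fix K \<delta> :: real assume K: "0 \<le> K" and \<delta>: "0 < \<delta>"
  have \<rho>: "0 < 1 / (1 + K)" using K by simp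
  obtain D where "eventually (\<lambda>y. tail_max (1 / (1 + K) * y) \<le> D * tail_max y) at_top"
    by (rule dominatedly_varying_bound[OF tail_dv \<rho>])
  moreover obtain \<Lambda> where "0 < \<Lambda>" "eventually (\<lambda>y. h (1 / (1 + K) * y) \<le> \<Lambda> * h y) at_top"
    by (rule dominatedly_varying_bound[OF h_dv \<rho>])
  ultimately show "((\<lambda>y. prob {w \<in> space M. \<delta> * h y < ord_stat X n (n-1) w \<and>
      y < ord_stat X n n w + K * ord_stat X n (n-1) w} / tail_max y) \<longlongrightarrow> 0) at_top"
    using star K \<delta> by (intro second_negligible_of_scaling[OF tail_pos]) auto
qed (use ab d star in auto)

end

theorem corollary3p2:
  fixes M :: "'a measure" and n :: nat and X C :: "nat \<Rightarrow> 'a \<Rightarrow> real"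
    and a b d :: real
  assumes P: "prob_space M"
    and n2: "n \<ge> 2"
    and Xmeas: "\<And>i. i \<in> {1..n} \<Longrightarrow> X i \<in> borel_measurable M"
    and Cmeas: "\<And>i. i < n \<Longrightarrow> C i \<in> borel_measurable M"
    and cases:
      "(\<exists>h. (\<forall>x. h x > 0) \<and>
             upper_endpoint (tail M (ord_stat X n n)) = \<infinity> \<and>
             GMDA (tail M (ord_stat X n n)) h \<and>
             (\<forall>i\<in>{1..n}. \<forall>j\<in>{1..n}. i \<noteq> j \<longrightarrow> (\<forall>t>0.
                ((\<lambda>x. measure M {w \<in> space M. \<bar>X i w\<bar> > t * h x \<and> X j w > x}
                      / tail M (ord_stat X n n) x) \<longlongrightarrow> 0) at_top)) \<and>
             (\<exists>L>0. \<forall>i\<in>{1..n}. \<forall>j\<in>{1..n}. i < j \<longrightarrow>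
                ((\<lambda>x. measure M {w \<in> space M. X i w > L * h x \<and> X j w > L * h x}
                      / tail M (ord_stat X n n) x) \<longlongrightarrow> 0) at_top))
       \<or>
       (long_tailed (tail M (ord_stat X n n)) \<and>
        (\<exists>h. H_class (tail M (ord_stat X n n)) h \<and>
             (\<forall>i\<in>{1..n}. \<forall>j\<in>{1..n}. i \<noteq> j \<longrightarrow> (\<forall>t>0.
                ((\<lambda>x. measure M {w \<in> space M. \<bar>X i w\<bar> > t * h x \<and> X j w > x}
                      / tail M (ord_stat X n n) x) \<longlongrightarrow> 0) at_top)) \<and>
             (\<exists>L>0. \<forall>i\<in>{1..n}. \<forall>j\<in>{1..n}. i < j \<longrightarrow>
                ((\<lambda>x. measure M {w \<in> space M. X i w > L * h x \<and> X j w > L * h x}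
                      / tail M (ord_stat X n n) x) \<longlongrightarrow> 0) at_top)))
       \<or>
       (long_tailed (tail M (ord_stat X n n)) \<and> dominatedly_varying (tail M (ord_stat X n n)) \<and>
        (\<exists>h. dominatedly_varying h \<and> H_class (tail M (ord_stat X n n)) h \<and>
             (\<forall>i\<in>{1..n}. \<forall>j\<in>{1..n}. i \<noteq> j \<longrightarrow> (\<forall>t>0.
                ((\<lambda>x. measure M {w \<in> space M. \<bar>X i w\<bar> > t * h x \<and> X j w > x}
                      / tail M (ord_stat X n n) x) \<longlongrightarrow> 0) at_top))))"
    and indep: "prob_space.indep_var M
        (Pi\<^sub>M {..<n} (\<lambda>_. borel)) (\<lambda>w. \<lambda>i\<in>{..<n}. C i w)
        (Pi\<^sub>M {1..n} (\<lambda>_. borel)) (\<lambda>w. \<lambda>i\<in>{1..n}. X i w)"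
    and ab: "0 < a" "a \<le> b" and d: "0 \<le> d"
    and C0: "measure M {w \<in> space M. a \<le> C 0 w \<and> C 0 w \<le> b} = 1"
    and Ci: "(\<forall>i\<in>{1..n-1}. measure M {w \<in> space M. 0 \<le> C i w \<and> C i w \<le> d} = 1)
           \<or> ((\<forall>i\<in>{1..n}. AE w in M. X i w \<ge> 0) \<and>
              (\<forall>i\<in>{1..n-1}. measure M {w \<in> space M. \<bar>C i w\<bar> \<le> d} = 1))"
  shows "(\<lambda>x. measure M {w \<in> space M. (\<Sum>i=0..n-1. C i w * ord_stat X n (n - i) w) > x})
           \<sim>[at_top] (\<lambda>x. measure M {w \<in> space M. C 0 w * ord_stat X n n w > x})
       \<and> (\<lambda>x. measure M {w \<in> space M. C 0 w * ord_stat X n n w > x})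
           \<sim>[at_top] (\<lambda>x. \<Sum>i=1..n. measure M {w \<in> space M. C 0 w * X i w > x})"
proof -
  interpret order_stat_model M n X
    by (rule order_stat_model.intro[OF P n2 Xmeas])
  have "\<exists>h. regular_max_tail M n X a b d h"
    using cases by (elim disjE exE conjE; blast intro: regular_max_tail_of_GMDA[OF ab d]
        regular_max_tail_of_H_class[OF ab d] regular_max_tail_of_dominated_variation[OF ab d])
  then obtain h where "regular_max_tail M n X a b d h" ..
  then interpret random_weights M n X a b d h C
    by (intro random_weights.intro random_weights_axioms.intro Cmeas indep C0 Ci)
  show ?thesis using weighted_sum_tail_equiv scaled_max_tail_equiv_sum by simp
qed

end
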